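(* Let $R$ be a two-dimensional regular local domain with regular parameters $\pi,\delta$, residue field $k=R/M$ and fraction field $K$. Let $T$ be transcendental over $K$ and let $a,b$ be positive integers. Then there is a discrete valuation $d:K(T)^*\to{\mathbb Z}$ such that $d(T)=1$, $d(\pi)=a$, $d(\delta)=b$, and the residue field of $d$ is $k(\pi',\delta')$, where $\pi'$ and $\delta'$ are the images of $\pi/T^a$ and $\delta/T^b$, and $\pi',\delta'$ are algebraically independent over $k$. *)

theory Defs
  imports Main "HOL-Library.Extended_Nat" "HOL-Computational_Algebra.Fraction_Field"
    "HOL-Computational_Algebra.Polynomial"
begin

definition is_ideal :: "'a::comm_ring_1 set \<Rightarrow> bool" where
  "is_ideal I \<longleftrightarrow> 0 \<in> I \<and> (\<forall>x\<in>I. \<forall>y\<in>I. x + y \<in> I) \<and> (\<forall>r. \<forall>x\<in>I. r * x \<in> I)"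

definition prime_ideal :: "'a::comm_ring_1 set \<Rightarrow> bool" where
  "prime_ideal P \<longleftrightarrow> is_ideal P \<and> P \<noteq> UNIV \<and> (\<forall>x y. x * y \<in> P \<longrightarrow> x \<in> P \<or> y \<in> P)"

definition maximal_ideal :: "'a::comm_ring_1 set \<Rightarrow> bool" where
  "maximal_ideal M \<longleftrightarrow> is_ideal M \<and> M \<noteq> UNIV \<and>
     (\<forall>J. is_ideal J \<and> M \<subseteq> J \<longrightarrow> J = M \<or> J = UNIV)"

definition noetherian_ring :: "'a::comm_ring_1 itself \<Rightarrow> bool" where
  "noetherian_ring _ \<longleftrightarrow> (\<forall>I :: nat \<Rightarrow> 'a set. (\<forall>n. is_ideal (I n)) \<and> mono I \<longrightarrow>
      (\<exists>N. \<forall>n\<ge>N. I n = I N))"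

definition local_ring :: "'a::comm_ring_1 itself \<Rightarrow> bool" where
  "local_ring _ \<longleftrightarrow> (\<exists>!M :: 'a set. maximal_ideal M)"

definition krull_dim :: "'a::comm_ring_1 itself \<Rightarrow> enat" where
  "krull_dim _ = Sup {enat n | n. \<exists>P :: nat \<Rightarrow> 'a set.
      (\<forall>i\<le>n. prime_ideal (P i)) \<and> (\<forall>i<n. P i \<subset> P (Suc i))}"

definition ideal2 :: "'a::comm_ring_1 \<Rightarrow> 'a \<Rightarrow> 'a set" where
  "ideal2 x y = {r * x + s * y | r s. True}"

text \<open>A (normalised) discrete valuation on the nonzero elements of a field; values at 0 are irrelevant.\<close>
definition discrete_valuation :: "('b::field \<Rightarrow> int) \<Rightarrow> bool" where
  "discrete_valuation d \<longleftrightarrow>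
     (\<forall>x y. x \<noteq> 0 \<longrightarrow> y \<noteq> 0 \<longrightarrow> d (x * y) = d x + d y) \<and>
     (\<forall>x y. x \<noteq> 0 \<longrightarrow> y \<noteq> 0 \<longrightarrow> x + y \<noteq> 0 \<longrightarrow> min (d x) (d y) \<le> d (x + y)) \<and>
     d ` (UNIV - {0}) = UNIV"

definition val_ring :: "('b::field \<Rightarrow> int) \<Rightarrow> 'b set" where
  "val_ring d = {x. x = 0 \<or> 0 \<le> d x}"

definition val_max :: "('b::field \<Rightarrow> int) \<Rightarrow> 'b set" where
  "val_max d = {x. x = 0 \<or> 0 < d x}"

section \<open>The field K(T) = Frac(K[T]), K = Frac(R)\<close>

type_synonym 'a ratfun = "'a fract poly fract"

definition varT :: "'a::idom ratfun" where
  "varT = Fract [:0, 1:] 1"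

definition embR :: "'a::idom \<Rightarrow> 'a ratfun" where
  "embR r = Fract [: Fract r 1 :] 1"

definition poly2 :: "nat \<Rightarrow> (nat \<Rightarrow> nat \<Rightarrow> 'a::idom) \<Rightarrow> 'a ratfun \<Rightarrow> 'a ratfun \<Rightarrow> 'a ratfun" where
  "poly2 N c u v = (\<Sum>i<N. \<Sum>j<N. embR (c i j) * u ^ i * v ^ j)"

end

theory Submission
  imports Defs
begin

text \<open>
  On \<open>R\<close> consider the ideals \<open>W\<^sub>n\<close> generated by the monomials \<open>\<pi>\<^sup>i \<delta>\<^sup>j\<close> of weight
  \<open>a i + b j \<ge> n\<close>, and let \<open>w x\<close> be the largest \<open>n\<close> with \<open>x \<in> W\<^sub>n\<close>. Because \<open>R\<close> is a
  two-dimensional regular local ring (\<open>\<pi>\<close> is not in the radical of \<open>(\<delta>)\<close> by a weak form of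
  Krull's principal ideal theorem, \<open>\<pi>\<close> is a non-zero-divisor modulo \<open>\<delta>\<close>, and Krull's intersection
  theorem holds), the associated graded ring of this filtration is a domain, so \<open>w\<close> is a
  valuation with \<open>w \<pi> = a\<close>, \<open>w \<delta> = b\<close>, positive exactly on \<open>M\<close>. It extends to \<open>K\<close>, then to
  \<open>K[T]\<close> by the Gauss construction giving \<open>T\<close> the value \<open>1\<close>, and then to \<open>K(T)\<close>.

  An element of value \<open>\<ge> 0\<close> is a quotient \<open>(F/T\<^sup>n) / (G/T\<^sup>n)\<close> of polynomials with coefficients
  in \<open>R\<close> and \<open>n\<close> the value of \<open>G\<close>; each term \<open>r T\<^sup>m / T\<^sup>n\<close> is, modulo the maximal ideal, a
  polynomial in \<open>U = \<pi>/T\<^sup>a\<close> and \<open>V = \<delta>/T\<^sup>b\<close> over \<open>R\<close>, so the residue field is generated by the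
  classes of \<open>U, V\<close>. Conversely, if a polynomial in \<open>U, V\<close> has a unit coefficient at
  \<open>(i, j)\<close>, its part of weight \<open>a i + b j\<close> has \<open>w\<close>-value exactly \<open>a i + b j\<close>, so the polynomial
  has value \<open>0\<close>: the classes of \<open>U, V\<close> are algebraically independent over \<open>k\<close>.
\<close>

section \<open>Valuations on integral domains\<close>

definition is_valuation :: "('b::idom \<Rightarrow> int) \<Rightarrow> bool" where
  "is_valuation v \<longleftrightarrow> (\<forall>x y. x \<noteq> 0 \<longrightarrow> y \<noteq> 0 \<longrightarrow> v (x * y) = v x + v y) \<and>
     (\<forall>x y. x \<noteq> 0 \<longrightarrow> y \<noteq> 0 \<longrightarrow> x + y \<noteq> 0 \<longrightarrow> min (v x) (v y) \<le> v (x + y))"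

lemma valuation_mult: "is_valuation v \<Longrightarrow> x \<noteq> 0 \<Longrightarrow> y \<noteq> 0 \<Longrightarrow> v (x * y) = v x + v y"
  unfolding is_valuation_def by blast

lemma valuation_add:
  "is_valuation v \<Longrightarrow> x \<noteq> 0 \<Longrightarrow> y \<noteq> 0 \<Longrightarrow> x + y \<noteq> 0 \<Longrightarrow> min (v x) (v y) \<le> v (x + y)"
  unfolding is_valuation_def by blast

lemma valuation_one: "is_valuation v \<Longrightarrow> v 1 = 0"
  using valuation_mult[of v 1 1] by simp

lemma valuation_power:
  assumes "is_valuation v" "x \<noteq> 0" shows "v (x ^ n) = int n * v x"
proof (induction n)
  case (Suc n)
  then show ?case using valuation_mult[OF assms(1), of x "x ^ n"] assms(2) by (simp add: algebra_simps)
qed (simp add: valuation_one[OF assms(1)])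

lemma valuation_uminus: assumes "is_valuation v" shows "v (- x) = v x"
proof (cases "x = 0")
  case False
  have "v (-1) = 0"
    using valuation_power[OF assms, of "-1" 2] valuation_one[OF assms] by simp
  then show ?thesis using valuation_mult[OF assms, of "-1" x] False by simp
qed simp

lemma valuation_add_ge:
  assumes "is_valuation v" "x = 0 \<or> c \<le> v x" "y = 0 \<or> c \<le> v y"
  shows "x + y = 0 \<or> c \<le> v (x + y)"
proof (cases "x = 0 \<or> y = 0 \<or> x + y = 0")
  case False
  then show ?thesis using valuation_add[OF assms(1), of x y] assms by auto
qed (use assms in auto)

lemma valuation_sum_ge:
  assumes "is_valuation v" "finite A" "\<forall>i\<in>A. f i = 0 \<or> c \<le> v (f i)"
  shows "sum f A = 0 \<or> c \<le> v (sum f A)"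
  using assms(2,3)
proof (induction A rule: finite_induct)
  case (insert x F)
  then show ?case using valuation_add_ge[OF assms(1), of "f x" c "sum f F"] by simp
qed simp

lemma valuation_add_dominant:
  assumes "is_valuation v" "x \<noteq> 0" "y = 0 \<or> v x < v y"
  shows "x + y \<noteq> 0 \<and> v (x + y) = v x"
proof (cases "y = 0")
  case False
  then have lt: "v x < v y" using assms by auto
  have nz: "x + y \<noteq> 0"
  proof
    assume "x + y = 0"
    then have "x = - y" by (simp add: eq_neg_iff_add_eq_0)
    then show False using lt valuation_uminus[OF assms(1), of y] by simp
  qed
  have "min (v (x + y)) (v (- y)) \<le> v (x + y + - y)"
    using valuation_add[OF assms(1) nz, of "- y"] False assms(2) by simp
  then show ?thesis
    using valuation_add[OF assms(1,2) False nz] lt nz valuation_uminus[OF assms(1), of y] by auto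
qed (use assms in auto)

lemma valuation_inverse:
  assumes "is_valuation v" "(x::'f::field) \<noteq> 0" shows "v (inverse x) = - v x"
  using valuation_mult[OF assms(1), of x "inverse x"] valuation_one[OF assms(1)] assms(2) by simp

lemma valuation_divide:
  assumes "is_valuation v" "(x::'f::field) \<noteq> 0" "y \<noteq> 0" shows "v (x / y) = v x - v y"
  using valuation_mult[OF assms(1), of x "inverse y"] valuation_inverse[OF assms(1,3)] assms(2,3)
  by (simp add: divide_inverse)

lemma discrete_valuationI:
  assumes "is_valuation (v :: 'f::field \<Rightarrow> int)" "v t = 1" "t \<noteq> 0"
  shows "discrete_valuation v"
proof -
  have "n \<in> v ` (UNIV - {0})" for n :: int
  proof (cases "n \<ge> 0")
    case True
    have "v (t ^ nat n) = n" using valuation_power[OF assms(1,3)] assms(2) True by simp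
    then show ?thesis using assms(3) by (intro image_eqI[of _ _ "t ^ nat n"]) auto
  next
    case False
    have "v (inverse (t ^ nat (- n))) = n"
      using valuation_inverse[OF assms(1)] valuation_power[OF assms(1,3)] assms(2,3) False by simp
    then show ?thesis using assms(3) by (intro image_eqI[of _ _ "inverse (t ^ nat (- n))"]) auto
  qed
  then show ?thesis using assms(1) unfolding discrete_valuation_def is_valuation_def by blast
qed

lemma val_ring_add:
  "is_valuation v \<Longrightarrow> x \<in> val_ring v \<Longrightarrow> y \<in> val_ring v \<Longrightarrow> x + y \<in> val_ring v"
  unfolding val_ring_def using valuation_add_ge[of v x 0 y] by auto

lemma val_max_add:
  "is_valuation v \<Longrightarrow> x \<in> val_max v \<Longrightarrow> y \<in> val_max v \<Longrightarrow> x + y \<in> val_max v"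
  unfolding val_max_def using valuation_add_ge[of v x 1 y] by auto

lemma val_ring_uminus: "is_valuation v \<Longrightarrow> x \<in> val_ring v \<Longrightarrow> - x \<in> val_ring v"
  unfolding val_ring_def using valuation_uminus[of v x] by auto

lemma val_max_uminus: "is_valuation v \<Longrightarrow> x \<in> val_max v \<Longrightarrow> - x \<in> val_max v"
  unfolding val_max_def using valuation_uminus[of v x] by auto

lemma val_ring_diff:
  "is_valuation v \<Longrightarrow> x \<in> val_ring v \<Longrightarrow> y \<in> val_ring v \<Longrightarrow> x - y \<in> val_ring v"
  using val_ring_add[of v x "- y"] val_ring_uminus[of v y] by simp

lemma val_max_subset_val_ring: "val_max v \<subseteq> val_ring v"
  unfolding val_max_def val_ring_def by auto

lemma val_max_mult:
  "is_valuation v \<Longrightarrow> x \<in> val_ring v \<Longrightarrow> y \<in> val_max v \<Longrightarrow> x * y \<in> val_max v"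
  unfolding val_ring_def val_max_def using valuation_mult[of v x y] by (cases "x = 0 \<or> y = 0") auto

lemma val_max_divide_congruent:
  assumes v: "is_valuation v" and x: "x \<in> val_ring v" "x - x' \<in> val_max v"
    and y: "y \<in> val_ring v" "y \<notin> val_max v" "y - y' \<in> val_max v"
  shows "y' \<notin> val_max v" "x / y - x' / y' \<in> val_max v"
proof -
  show y': "y' \<notin> val_max v"
  proof
    assume "y' \<in> val_max v"
    then have "(y - y') + y' \<in> val_max v" by (rule val_max_add[OF v y(3)])
    then show False using y(2) by simp
  qed
  have "y' = y - (y - y')" by simp
  then have "y' \<in> val_ring v"
    using val_ring_diff[OF v y(1)] val_max_subset_val_ring y(3) by (metis subsetD)
  then have y'0: "y' \<noteq> 0" "v y' = 0" using y' unfolding val_ring_def val_max_def by auto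
  have y0: "y \<noteq> 0" "v y = 0" using y(1,2) unfolding val_ring_def val_max_def by auto
  define num where "num = x * (y' - y) + y * (x - x')"
  have eq: "x / y - x' / y' = num / (y * y')"
    unfolding num_def using y0 y'0 by (simp add: field_simps)
  have "num \<in> val_max v" unfolding num_def
    using val_max_add[OF v val_max_mult[OF v x(1)] val_max_mult[OF v y(1) x(2)]]
      val_max_uminus[OF v y(3)] by simp
  moreover have "y * y' \<noteq> 0" "v (y * y') = 0"
    using y0 y'0 valuation_mult[OF v] by auto
  ultimately show "x / y - x' / y' \<in> val_max v"
    unfolding eq val_max_def using valuation_divide[OF v] by (cases "num = 0") auto
qed

definition frac_valuation :: "('b::idom \<Rightarrow> int) \<Rightarrow> 'b fract \<Rightarrow> int" where
  "frac_valuation v q =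
     (let p = (SOME p. snd p \<noteq> 0 \<and> q = Fract (fst p) (snd p)) in v (fst p) - v (snd p))"

lemma frac_valuation_Fract:
  assumes "is_valuation v" "r \<noteq> 0" "s \<noteq> 0"
  shows "frac_valuation v (Fract r s) = v r - v s"
proof -
  define p where "p = (SOME p. snd p \<noteq> 0 \<and> Fract r s = Fract (fst p) (snd p))"
  have "\<exists>p. snd p \<noteq> 0 \<and> Fract r s = Fract (fst p) (snd p)"
    using assms by (intro exI[of _ "(r, s)"]) auto
  then have p: "snd p \<noteq> 0 \<and> Fract r s = Fract (fst p) (snd p)"
    unfolding p_def by (rule someI_ex)
  then have e: "r * snd p = fst p * s" using assms eq_fract(1) by blast
  then have "fst p \<noteq> 0" using assms p by auto
  then have "v r + v (snd p) = v (fst p) + v s"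
    using e valuation_mult[OF assms(1)] assms p by metis
  then show ?thesis unfolding frac_valuation_def p_def[symmetric] Let_def by simp
qed

lemma frac_valuation_Fract_1:
  "is_valuation v \<Longrightarrow> r \<noteq> 0 \<Longrightarrow> frac_valuation v (Fract r 1) = v r"
  using frac_valuation_Fract[of v r 1] valuation_one[of v] by simp

lemma is_valuation_frac_valuation:
  assumes v: "is_valuation v" shows "is_valuation (frac_valuation v)"
  unfolding is_valuation_def
proof (intro conjI allI impI)
  fix x y :: "'a fract" assume "x \<noteq> 0" "y \<noteq> 0"
  then obtain r s r' s' where xr: "x = Fract r s" "s \<noteq> 0" "r \<noteq> 0"
    and yr: "y = Fract r' s'" "s' \<noteq> 0" "r' \<noteq> 0"
    by (metis Fract_cases_nonzero)
  show "frac_valuation v (x * y) = frac_valuation v x + frac_valuation v y"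
    using xr yr by (simp add: frac_valuation_Fract[OF v] valuation_mult[OF v])
  assume xy: "x + y \<noteq> 0"
  have sum: "x + y = Fract (r * s' + r' * s) (s * s')" using xr yr by simp
  have nz: "r * s' + r' * s \<noteq> 0" using xy sum by (auto simp: fract_collapse)
  have "min (v (r * s')) (v (r' * s)) \<le> v (r * s' + r' * s)"
    using valuation_add[OF v, of "r * s'" "r' * s"] nz xr yr by simp
  then show "min (frac_valuation v x) (frac_valuation v y) \<le> frac_valuation v (x + y)"
    using xr yr nz by (simp add: sum frac_valuation_Fract[OF v] valuation_mult[OF v])
qed

definition gauss_valuation :: "('k::idom \<Rightarrow> int) \<Rightarrow> 'k poly \<Rightarrow> int" where
  "gauss_valuation v p = Min ((\<lambda>m. v (coeff p m) + int m) ` {m. coeff p m \<noteq> 0})"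

lemma finite_coeff_nonzero: "finite {m. coeff p m \<noteq> 0}"
  by (rule finite_subset[of _ "{..degree p}"]) (auto intro: le_degree)

lemma gauss_valuation_le: "coeff p m \<noteq> 0 \<Longrightarrow> gauss_valuation v p \<le> v (coeff p m) + int m"
  unfolding gauss_valuation_def by (rule Min_le) (auto simp: finite_coeff_nonzero)

lemma gauss_valuation_ge:
  "p \<noteq> 0 \<Longrightarrow> (\<And>m. coeff p m \<noteq> 0 \<Longrightarrow> c \<le> v (coeff p m) + int m) \<Longrightarrow> c \<le> gauss_valuation v p"
  unfolding gauss_valuation_def by (subst Min_ge_iff) (auto simp: finite_coeff_nonzero poly_eq_iff)

lemma gauss_valuation_least_index:
  assumes "p \<noteq> 0"
  obtains i0 where "coeff p i0 \<noteq> 0" "gauss_valuation v p = v (coeff p i0) + int i0"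
    "\<And>i. i < i0 \<Longrightarrow> coeff p i = 0 \<or> gauss_valuation v p < v (coeff p i) + int i"
proof -
  define P where "P i \<longleftrightarrow> coeff p i \<noteq> 0 \<and> gauss_valuation v p = v (coeff p i) + int i" for i
  have "{m. coeff p m \<noteq> 0} \<noteq> {}" using assms by (auto simp: poly_eq_iff)
  then have "gauss_valuation v p \<in> (\<lambda>m. v (coeff p m) + int m) ` {m. coeff p m \<noteq> 0}"
    unfolding gauss_valuation_def by (intro Min_in) (auto simp: finite_coeff_nonzero)
  then obtain m where "P m" unfolding P_def by auto
  then have "P (LEAST i. P i)" by (rule LeastI)
  moreover have "coeff p i = 0 \<or> gauss_valuation v p < v (coeff p i) + int i"
    if "i < (LEAST i. P i)" for i
    using not_less_Least[OF that] gauss_valuation_le[of p i v] unfolding P_def by force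
  ultimately show ?thesis using that unfolding P_def by blast
qed

lemma gauss_valuation_add:
  assumes v: "is_valuation v" and "p + q \<noteq> 0"
  shows "min (gauss_valuation v p) (gauss_valuation v q) \<le> gauss_valuation v (p + q)"
proof (rule gauss_valuation_ge[OF assms(2)])
  fix m assume nz: "coeff (p + q) m \<noteq> 0"
  let ?c = "min (gauss_valuation v p) (gauss_valuation v q) - int m"
  have "coeff p m = 0 \<or> ?c \<le> v (coeff p m)" "coeff q m = 0 \<or> ?c \<le> v (coeff q m)"
    using gauss_valuation_le[of p m v] gauss_valuation_le[of q m v] by force+
  then have "coeff p m + coeff q m = 0 \<or> ?c \<le> v (coeff p m + coeff q m)"
    by (rule valuation_add_ge[OF v])
  then show "min (gauss_valuation v p) (gauss_valuation v q) \<le> v (coeff (p + q) m) + int m"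
    using nz by auto
qed

lemma gauss_valuation_mult_ge:
  assumes v: "is_valuation v" and "p * q \<noteq> 0"
  shows "gauss_valuation v p + gauss_valuation v q \<le> gauss_valuation v (p * q)"
proof (rule gauss_valuation_ge[OF assms(2)])
  fix m assume nz: "coeff (p * q) m \<noteq> 0"
  let ?c = "gauss_valuation v p + gauss_valuation v q - int m"
  have "coeff p i * coeff q (m - i) = 0 \<or> ?c \<le> v (coeff p i * coeff q (m - i))"
    if "i \<in> {..m}" for i
  proof (cases "coeff p i = 0 \<or> coeff q (m - i) = 0")
    case False
    then show ?thesis
      using gauss_valuation_le[of p i v] gauss_valuation_le[of q "m - i" v] that
        valuation_mult[OF v, of "coeff p i" "coeff q (m - i)"] by auto
  qed auto
  then have "coeff (p * q) m = 0 \<or> ?c \<le> v (coeff (p * q) m)"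
    using valuation_sum_ge[OF v, of "{..m}"] by (simp add: coeff_mult)
  then show "gauss_valuation v p + gauss_valuation v q \<le> v (coeff (p * q) m) + int m"
    using nz by simp
qed

text \<open>The product of the lowest-index coefficients attaining the minimum strictly dominates
  all other contributions to the corresponding coefficient of \<open>p * q\<close>.\<close>
lemma gauss_valuation_mult_le:
  assumes v: "is_valuation v" and p: "p \<noteq> 0" and q: "q \<noteq> 0"
  shows "gauss_valuation v (p * q) \<le> gauss_valuation v p + gauss_valuation v q"
proof -
  obtain i0 where i0: "coeff p i0 \<noteq> 0" "gauss_valuation v p = v (coeff p i0) + int i0"
    "\<And>i. i < i0 \<Longrightarrow> coeff p i = 0 \<or> gauss_valuation v p < v (coeff p i) + int i"
    using gauss_valuation_least_index[OF p] by blast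
  obtain j0 where j0: "coeff q j0 \<noteq> 0" "gauss_valuation v q = v (coeff q j0) + int j0"
    "\<And>i. i < j0 \<Longrightarrow> coeff q i = 0 \<or> gauss_valuation v q < v (coeff q i) + int i"
    using gauss_valuation_least_index[OF q] by blast
  define m where "m = i0 + j0"
  define c where "c = gauss_valuation v p + gauss_valuation v q - int m"
  define t where "t i = coeff p i * coeff q (m - i)" for i
  have t0: "t i0 \<noteq> 0" "v (t i0) = c"
    using i0 j0 valuation_mult[OF v, of "coeff p i0" "coeff q j0"] by (auto simp: t_def m_def c_def)
  have "t i = 0 \<or> c + 1 \<le> v (t i)" if i: "i \<in> {..m} - {i0}" for i
  proof (cases "coeff p i = 0 \<or> coeff q (m - i) = 0")
    case False
    then have "v (t i) = v (coeff p i) + v (coeff q (m - i))"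
      using valuation_mult[OF v] by (simp add: t_def)
    moreover have "i < i0 \<or> m - i < j0" using i by (auto simp: m_def)
    ultimately show ?thesis
      using i0(3)[of i] j0(3)[of "m - i"] gauss_valuation_le[of q "m - i" v]
        gauss_valuation_le[of p i v] False i by (auto simp: c_def)
  qed (auto simp: t_def)
  then have "sum t ({..m} - {i0}) = 0 \<or> c + 1 \<le> v (sum t ({..m} - {i0}))"
    by (intro valuation_sum_ge[OF v]) auto
  then have "t i0 + sum t ({..m} - {i0}) \<noteq> 0 \<and> v (t i0 + sum t ({..m} - {i0})) = v (t i0)"
    using t0 by (intro valuation_add_dominant[OF v]) auto
  moreover have "coeff (p * q) m = t i0 + sum t ({..m} - {i0})"
    unfolding coeff_mult t_def[symmetric] by (subst sum.remove[of _ i0]) (auto simp: m_def)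
  ultimately show ?thesis
    using gauss_valuation_le[of "p * q" m v] t0 by (simp add: c_def)
qed

lemma is_valuation_gauss_valuation:
  assumes "is_valuation v" shows "is_valuation (gauss_valuation v)"
  unfolding is_valuation_def
  using gauss_valuation_add[OF assms] gauss_valuation_mult_ge[OF assms]
    gauss_valuation_mult_le[OF assms] by (auto intro: antisym)

lemma is_ideal_0: "is_ideal I \<Longrightarrow> 0 \<in> I"
  unfolding is_ideal_def by blast

lemma is_ideal_add: "is_ideal I \<Longrightarrow> x \<in> I \<Longrightarrow> y \<in> I \<Longrightarrow> x + y \<in> I"
  unfolding is_ideal_def by blast

lemma is_ideal_mult_left: "is_ideal I \<Longrightarrow> x \<in> I \<Longrightarrow> r * x \<in> I"
  unfolding is_ideal_def by blast

lemma is_ideal_mult_right: "is_ideal I \<Longrightarrow> x \<in> I \<Longrightarrow> x * r \<in> I"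
  using is_ideal_mult_left[of I x r] by (simp add: mult.commute)

lemma is_ideal_diff: "is_ideal I \<Longrightarrow> x \<in> I \<Longrightarrow> y \<in> I \<Longrightarrow> x - y \<in> I"
  using is_ideal_add[of I x "- y"] is_ideal_mult_left[of I y "- 1"] by simp

lemma is_ideal_sum: "is_ideal I \<Longrightarrow> (\<And>i. i \<in> A \<Longrightarrow> f i \<in> I) \<Longrightarrow> sum f A \<in> I"
  by (induction A rule: infinite_finite_induct) (auto intro: is_ideal_0 is_ideal_add)

lemma is_ideal_eq_UNIV_iff: "is_ideal I \<Longrightarrow> I = UNIV \<longleftrightarrow> 1 \<in> I"
  using is_ideal_mult_left[of I 1] by auto

lemma is_ideal_UNIV: "is_ideal UNIV"
  unfolding is_ideal_def by blast

lemma is_ideal_multiples: "is_ideal {y. x dvd y}"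
  unfolding is_ideal_def by auto

lemma is_ideal_dvd_mult: "is_ideal {z. d dvd c * z}"
  unfolding is_ideal_def
proof (intro conjI ballI allI)
  show "0 \<in> {z. d dvd c * z}" by simp
  fix x y assume "x \<in> {z. d dvd c * z}" "y \<in> {z. d dvd c * z}"
  then show "x + y \<in> {z. d dvd c * z}" by (simp add: distrib_left dvd_add)
next
  fix r x assume "x \<in> {z. d dvd c * z}"
  then have "d dvd r * (c * x)" by (simp add: dvd_mult)
  then show "r * x \<in> {z. d dvd c * z}" by (simp add: mult.left_commute)
qed

lemma is_ideal_mult_preimage:
  assumes "is_ideal I" shows "is_ideal {y. z * y \<in> I}"
  unfolding is_ideal_def
proof (intro conjI ballI allI)
  show "0 \<in> {y. z * y \<in> I}" using is_ideal_0[OF assms] by simp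
  fix x y assume "x \<in> {y. z * y \<in> I}" "y \<in> {y. z * y \<in> I}"
  then show "x + y \<in> {y. z * y \<in> I}" using is_ideal_add[OF assms] by (simp add: distrib_left)
next
  fix r x assume "x \<in> {y. z * y \<in> I}"
  then have "r * (z * x) \<in> I" by (simp add: is_ideal_mult_left[OF assms])
  then show "r * x \<in> {y. z * y \<in> I}" by (simp add: mult.left_commute)
qed

lemma is_ideal_lincomb:
  assumes "is_ideal I" shows "is_ideal {c * r + d * x | r x. x \<in> I}"
  unfolding is_ideal_def
proof (intro conjI ballI allI)
  show "0 \<in> {c * r + d * x | r x. x \<in> I}"
    using is_ideal_0[OF assms] by (auto intro!: exI[of _ 0])
  fix u v assume "u \<in> {c * r + d * x | r x. x \<in> I}" "v \<in> {c * r + d * x | r x. x \<in> I}"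
  then obtain r x r' x' where "u = c * r + d * x" "v = c * r' + d * x'" "x \<in> I" "x' \<in> I"
    by blast
  then show "u + v \<in> {c * r + d * x | r x. x \<in> I}"
    using is_ideal_add[OF assms, of x x']
    by (intro CollectI exI[of _ "r + r'"] exI[of _ "x + x'"]) (simp add: algebra_simps)
next
  fix t u assume "u \<in> {c * r + d * x | r x. x \<in> I}"
  then obtain r x where "u = c * r + d * x" "x \<in> I" by blast
  then show "t * u \<in> {c * r + d * x | r x. x \<in> I}"
    using is_ideal_mult_left[OF assms, of x t]
    by (intro CollectI exI[of _ "t * r"] exI[of _ "t * x"]) (simp add: algebra_simps)
qed

lemma ideal2_eq: "ideal2 x y = {x * r + y * s | r s. s \<in> UNIV}"
  unfolding ideal2_def by (auto simp: mult.commute)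

lemma is_ideal_ideal2: "is_ideal (ideal2 x y)"
  unfolding ideal2_eq by (rule is_ideal_lincomb[OF is_ideal_UNIV])

lemma ideal2_left: "x \<in> ideal2 x y"
  unfolding ideal2_def by (intro CollectI exI[of _ 1] exI[of _ 0]) simp

lemma ideal2_right: "y \<in> ideal2 x y"
  unfolding ideal2_def by (intro CollectI exI[of _ 0] exI[of _ 1]) simp

lemma ideal2_least: "is_ideal I \<Longrightarrow> x \<in> I \<Longrightarrow> y \<in> I \<Longrightarrow> ideal2 x y \<subseteq> I"
  unfolding ideal2_def by (auto intro: is_ideal_add is_ideal_mult_left)

lemma ideal2_commute: "ideal2 x y = ideal2 y x"
  using ideal2_least[OF is_ideal_ideal2 ideal2_right ideal2_left] by blast

definition gen_ideal :: "'a::comm_ring_1 set \<Rightarrow> 'a set" where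
  "gen_ideal G = \<Inter>{I. is_ideal I \<and> G \<subseteq> I}"

lemma is_ideal_gen_ideal: "is_ideal (gen_ideal G)"
  unfolding gen_ideal_def is_ideal_def by blast

lemma gen_ideal_subset: "G \<subseteq> gen_ideal G"
  unfolding gen_ideal_def by blast

lemma gen_ideal_least: "is_ideal I \<Longrightarrow> G \<subseteq> I \<Longrightarrow> gen_ideal G \<subseteq> I"
  unfolding gen_ideal_def by blast

lemma gen_ideal_mono: "G \<subseteq> H \<Longrightarrow> gen_ideal G \<subseteq> gen_ideal H"
  using gen_ideal_least[OF is_ideal_gen_ideal] gen_ideal_subset by blast

lemma gen_ideal_empty: "gen_ideal {} = {0}"
  using gen_ideal_least[of "{0}" "{}"] is_ideal_0[OF is_ideal_gen_ideal]
  by (auto simp: is_ideal_def)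

lemma gen_ideal_insert: "gen_ideal (insert g G) = {g * r + 1 * h | r h. h \<in> gen_ideal G}"
proof
  have "is_ideal {g * r + 1 * h | r h. h \<in> gen_ideal G}"
    by (rule is_ideal_lincomb[OF is_ideal_gen_ideal])
  moreover have "insert g G \<subseteq> {g * r + 1 * h | r h. h \<in> gen_ideal G}"
  proof -
    have "g = g * 1 + 1 * 0" "h = g * 0 + 1 * h" for h by simp_all
    then show ?thesis using is_ideal_0[OF is_ideal_gen_ideal, of G] gen_ideal_subset[of G] by blast
  qed
  ultimately show "gen_ideal (insert g G) \<subseteq> {g * r + 1 * h | r h. h \<in> gen_ideal G}"
    by (rule gen_ideal_least)
  show "{g * r + 1 * h | r h. h \<in> gen_ideal G} \<subseteq> gen_ideal (insert g G)"
    using gen_ideal_mono[of G "insert g G"] gen_ideal_subset[of "insert g G"]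
    by (auto intro!: is_ideal_add[OF is_ideal_gen_ideal] is_ideal_mult_right[OF is_ideal_gen_ideal])
qed

lemma noetherian_ring_stabilizes:
  fixes I :: "nat \<Rightarrow> 'a::comm_ring_1 set"
  assumes "noetherian_ring TYPE('a)" "\<And>n. is_ideal (I n)" "mono I"
  shows "\<exists>N. \<forall>n\<ge>N. I n = I N"
  using assms unfolding noetherian_ring_def by blast

lemma noetherian_ring_stabilizes_Suc:
  fixes I :: "nat \<Rightarrow> 'a::comm_ring_1 set"
  assumes "noetherian_ring TYPE('a)" "\<And>n. is_ideal (I n)" "\<And>n. I n \<subseteq> I (Suc n)"
  obtains N where "I (Suc N) = I N"
  using noetherian_ring_stabilizes[OF assms(1,2)] assms(3)
  by (metis le_SucI mono_iff_le_Suc order_refl)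

lemma noetherian_ring_maximal_element:
  fixes S :: "'a::comm_ring_1 set set"
  assumes "noetherian_ring TYPE('a)" "S \<noteq> {}" "\<forall>J\<in>S. is_ideal J"
  shows "\<exists>J\<in>S. \<forall>J'\<in>S. J \<subseteq> J' \<longrightarrow> J' = J"
proof (rule ccontr)
  assume "\<not> ?thesis"
  then have H: "\<forall>J\<in>S. \<exists>J'\<in>S. J \<subset> J'" by blast
  then obtain next_ideal where nxt: "\<And>J. J \<in> S \<Longrightarrow> next_ideal J \<in> S \<and> J \<subset> next_ideal J"
    by metis
  obtain J0 where "J0 \<in> S" using assms(2) by blast
  define f where "f n = (next_ideal ^^ n) J0" for n
  have "f n \<in> S" for n by (induction n) (use \<open>J0 \<in> S\<close> nxt in \<open>auto simp: f_def\<close>)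
  then have strict: "f n \<subset> f (Suc n)" for n using nxt by (simp add: f_def)
  obtain N where "f (Suc N) = f N"
    using noetherian_ring_stabilizes_Suc[OF assms(1), of f] \<open>\<And>n. f n \<in> S\<close> assms(3) strict
    by blast
  then show False using strict[of N] by simp
qed

lemma noetherian_ring_finitely_generated:
  fixes I :: "'a::comm_ring_1 set"
  assumes "noetherian_ring TYPE('a)" "is_ideal I"
  obtains G where "finite G" "gen_ideal G = I"
proof -
  let ?S = "{gen_ideal G | G. finite G \<and> G \<subseteq> I}"
  have "gen_ideal {} \<in> ?S" by blast
  then obtain J where J: "J \<in> ?S" "\<forall>J'\<in>?S. J \<subseteq> J' \<longrightarrow> J' = J"
    using noetherian_ring_maximal_element[OF assms(1), of ?S] is_ideal_gen_ideal by blast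
  then obtain G where G: "J = gen_ideal G" "finite G" "G \<subseteq> I" by auto
  have "x \<in> J" if "x \<in> I" for x
  proof -
    have "gen_ideal (insert x G) \<in> ?S" using G that by blast
    then have "gen_ideal (insert x G) = J" using J(2) G(1) gen_ideal_mono[of G "insert x G"] by blast
    then show ?thesis using gen_ideal_subset[of "insert x G"] by blast
  qed
  moreover have "J \<subseteq> I" using G gen_ideal_least[OF assms(2)] by auto
  ultimately show ?thesis using that G by blast
qed

lemma dvd_mult_unit_cancel:
  fixes u :: "'a::comm_monoid_mult"
  assumes "u * w = 1" "d dvd u * z" shows "d dvd z"
proof -
  have "d dvd w * (u * z)" using assms(2) by (rule dvd_mult)
  also have "w * (u * z) = (u * w) * z" by (simp only: ac_simps)
  finally show ?thesis using assms(1) by simp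
qed

lemma bounded_incseq_plateau:
  fixes f :: "nat \<Rightarrow> nat"
  assumes "\<And>m. f m \<le> f (Suc m)" "\<And>m. f m \<le> n"
  obtains m where "f (Suc m) = f m"
proof -
  have "\<exists>m. f (Suc m) = f m"
  proof (rule ccontr)
    assume none: "\<nexists>m. f (Suc m) = f m"
    have "f m \<ge> m" for m
    proof (induction m)
      case (Suc m)
      have "f m < f (Suc m)" using assms(1)[of m] none by (metis le_neq_implies_less)
      then show ?case using Suc.IH by simp
    qed simp
    then show False using assms(2)[of "Suc n"] by (meson not_less_eq_eq)
  qed
  then show ?thesis using that by blast
qed

locale noetherian_local_ring =
  fixes M :: "'a::idom set"
  assumes noeth: "noetherian_ring TYPE('a)" and loc: "local_ring TYPE('a)"
    and max_M: "maximal_ideal M"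
begin

lemma is_ideal_M: "is_ideal M"
  using max_M unfolding maximal_ideal_def by blast

lemma one_notin_M: "1 \<notin> M"
  using max_M is_ideal_eq_UNIV_iff[OF is_ideal_M] unfolding maximal_ideal_def by blast

lemma proper_ideal_subset_M:
  assumes "is_ideal I" "1 \<notin> I"
  shows "I \<subseteq> M"
proof -
  let ?S = "{J. is_ideal J \<and> 1 \<notin> J \<and> I \<subseteq> J}"
  have "I \<in> ?S" using assms by blast
  then have "\<exists>J\<in>?S. \<forall>J'\<in>?S. J \<subseteq> J' \<longrightarrow> J' = J"
    by (intro noetherian_ring_maximal_element[OF noeth]) auto
  then obtain J where J: "J \<in> ?S" "\<forall>J'\<in>?S. J \<subseteq> J' \<longrightarrow> J' = J" by blast
  have "maximal_ideal J" unfolding maximal_ideal_def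
  proof (intro conjI allI impI)
    show "is_ideal J" "J \<noteq> UNIV" using J by auto
    fix J' assume "is_ideal J' \<and> J \<subseteq> J'"
    then show "J' = J \<or> J' = UNIV" using J is_ideal_eq_UNIV_iff by blast
  qed
  then have "J = M" using loc max_M unfolding local_ring_def by blast
  then show ?thesis using J by blast
qed

lemma notin_M_iff: "x \<notin> M \<longleftrightarrow> x dvd 1"
proof
  assume x: "x \<notin> M"
  show "x dvd 1"
  proof (rule ccontr)
    assume "\<not> x dvd 1"
    then have "{y. x dvd y} \<subseteq> M" by (intro proper_ideal_subset_M[OF is_ideal_multiples]) simp
    moreover have "x \<in> {y. x dvd y}" by simp
    ultimately show False using x by blast
  qed
next
  assume "x dvd 1"
  then obtain w where "1 = x * w" by (elim dvdE)
  then show "x \<notin> M" using one_notin_M is_ideal_mult_right[OF is_ideal_M, of x w] by auto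
qed

lemma unit_one_minus: assumes "x \<in> M" shows "(1 - c * x) dvd 1"
proof -
  have "1 - c * x \<notin> M"
    using is_ideal_add[OF is_ideal_M _ is_ideal_mult_left[OF is_ideal_M assms, of c]] one_notin_M
    by fastforce
  then show ?thesis using notin_M_iff by blast
qed

lemma solve_for_generator:
  assumes x: "x \<in> M" and g: "g = l + x * (g * c + h)"
  obtains w where "g = w * l + w * x * h"
proof -
  obtain w where w: "(1 - c * x) * w = 1"
    using unit_one_minus[OF x, of c] by (metis dvdE)
  have "(1 - c * x) * g = g - x * (g * c)" by (simp add: algebra_simps)
  also have "\<dots> = (l + x * (g * c + h)) - x * (g * c)"
    by (rule arg_cong[where f = "\<lambda>z. z - x * (g * c)", OF g])
  also have "\<dots> = l + x * h" by (simp add: algebra_simps)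
  finally have e: "(1 - c * x) * g = l + x * h" .
  have "g = ((1 - c * x) * w) * g" using w by simp
  also have "\<dots> = w * ((1 - c * x) * g)" by (simp only: ac_simps)
  also have "\<dots> = w * l + w * x * h" unfolding e by (simp add: algebra_simps)
  finally show ?thesis using that by blast
qed

lemma nakayama:
  assumes L: "is_ideal L" and x: "x \<in> M" and G: "finite G"
    and H: "\<forall>g\<in>gen_ideal G. \<exists>l\<in>L. \<exists>h\<in>gen_ideal G. g = l + x * h"
  shows "gen_ideal G \<subseteq> L"
  using G H
proof (induction G rule: finite_induct)
  case empty
  then show ?case using is_ideal_0[OF L] by (simp add: gen_ideal_empty)
next
  case (insert g G)
  let ?N = "gen_ideal (insert g G)"
  have in_N: "h \<in> ?N \<longleftrightarrow> (\<exists>c h'. h = g * c + h' \<and> h' \<in> gen_ideal G)" for h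
    unfolding gen_ideal_insert by auto
  have "g \<in> ?N" using gen_ideal_subset by blast
  then obtain l h where l: "l \<in> L" "h \<in> ?N" "g = l + x * h" using insert.prems by blast
  then obtain c h' where hc: "h = g * c + h'" "h' \<in> gen_ideal G" using in_N by blast
  have lh: "l \<in> L" "h' \<in> gen_ideal G" "g = l + x * (g * c + h')"
    using l(1,3) hc(2) unfolding hc(1) by simp_all
  obtain w' where gexp: "g = w' * l + w' * x * h'" using solve_for_generator[OF x lh(3)] .
  have "\<forall>g0\<in>gen_ideal G. \<exists>l\<in>L. \<exists>h\<in>gen_ideal G. g0 = l + x * h"
  proof
    fix g0 assume "g0 \<in> gen_ideal G"
    then have "g0 \<in> ?N" using gen_ideal_mono[of G "insert g G"] by blast
    then obtain l0 h0 where l0h0: "l0 \<in> L" "h0 \<in> ?N" "g0 = l0 + x * h0"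
      using insert.prems by blast
    then obtain c0 h0' where hc0: "h0 = g * c0 + h0'" "h0' \<in> gen_ideal G" using in_N by blast
    have l0: "l0 \<in> L" "h0' \<in> gen_ideal G" "g0 = l0 + x * (g * c0 + h0')"
      using l0h0(1,3) hc0(2) unfolding hc0(1) by simp_all
    have "g0 = (l0 + x * c0 * w' * l) + x * (c0 * w' * x * h' + h0')"
      using l0(3) gexp by (simp add: algebra_simps)
    moreover have "l0 + x * c0 * w' * l \<in> L"
      using l0 lh is_ideal_add[OF L] is_ideal_mult_left[OF L] by simp
    moreover have "c0 * w' * x * h' + h0' \<in> gen_ideal G"
      using lh(2) l0(2) by (intro is_ideal_add[OF is_ideal_gen_ideal] is_ideal_mult_left[OF is_ideal_gen_ideal])
    ultimately show "\<exists>l\<in>L. \<exists>h\<in>gen_ideal G. g0 = l + x * h" by blast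
  qed
  then have sub: "gen_ideal G \<subseteq> L" by (rule insert.IH)
  then have "g \<in> L"
    unfolding gexp using lh(1,2) by (auto intro!: is_ideal_add[OF L] is_ideal_mult_left[OF L])
  show ?case
  proof
    fix z assume "z \<in> ?N"
    then obtain r k where z: "z = g * r + k" "k \<in> gen_ideal G" using in_N by blast
    have "g * r \<in> L" by (rule is_ideal_mult_right[OF L \<open>g \<in> L\<close>])
    moreover have "k \<in> L" using sub z(2) by blast
    ultimately show "z \<in> L" unfolding z(1) by (rule is_ideal_add[OF L])
  qed
qed

lemma ideal_subset_ideal2_power:
  assumes J: "is_ideal J" and Mxy: "M = ideal2 x y" and yJ: "y \<in> J"
    and lt: "\<forall>k<i. x ^ k \<notin> J"
  shows "J \<subseteq> ideal2 (x ^ i) y"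
proof
  fix z assume z: "z \<in> J"
  have "k \<le> i \<Longrightarrow> \<exists>r t. z = r * x ^ k + t * y" for k
  proof (induction k)
    case 0 show ?case by (rule exI[of _ z], rule exI[of _ 0]) simp
  next
    case (Suc k)
    then obtain r t where rt: "z = r * x ^ k + t * y" by auto
    have "r \<in> M"
    proof (rule ccontr)
      assume "r \<notin> M"
      then obtain r' where r': "1 = r * r'" using notin_M_iff by (auto elim: dvdE)
      have "r * x ^ k = z - t * y" using rt by simp
      also have "\<dots> \<in> J" by (rule is_ideal_diff[OF J z is_ideal_mult_left[OF J yJ]])
      finally have "r' * (r * x ^ k) \<in> J" by (rule is_ideal_mult_left[OF J])
      moreover have "r' * (r * x ^ k) = x ^ k" using r' by (simp add: algebra_simps)
      ultimately show False using lt Suc by auto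
    qed
    then obtain r1 r2 where "r = r1 * x + r2 * y" using Mxy unfolding ideal2_def by blast
    then have "z = r1 * x ^ Suc k + (t + r2 * x ^ k) * y" using rt by (simp add: algebra_simps)
    then show ?case by blast
  qed
  then show "z \<in> ideal2 (x ^ i) y" unfolding ideal2_def by blast
qed

lemma descending_ideals_stabilize:
  assumes Mxy: "M = ideal2 x y" and J_ideal: "\<And>m. is_ideal (J m)"
    and J_Suc: "\<And>m. J (Suc m) \<subseteq> J m" and yJ: "\<And>m. y \<in> J m" and xJ: "\<And>m. x ^ n \<in> J m"
  obtains m where "J m \<subseteq> J (Suc m)"
proof -
  define ind where "ind m = (LEAST i. x ^ i \<in> J m)" for m
  have ind_in: "x ^ ind m \<in> J m" for m
    unfolding ind_def by (rule LeastI[of "\<lambda>i. x ^ i \<in> J m", OF xJ])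
  have "ind m \<le> ind (Suc m)" for m
  proof -
    have "x ^ ind (Suc m) \<in> J m" using ind_in[of "Suc m"] J_Suc by blast
    then show ?thesis unfolding ind_def[of m] by (rule Least_le)
  qed
  moreover have "ind m \<le> n" for m
    unfolding ind_def by (rule Least_le[of "\<lambda>i. x ^ i \<in> J m", OF xJ])
  ultimately obtain m where m: "ind (Suc m) = ind m" by (rule bounded_incseq_plateau)
  have "\<forall>k<ind m. x ^ k \<notin> J m" unfolding ind_def using not_less_Least by blast
  then have "J m \<subseteq> ideal2 (x ^ ind m) y" by (rule ideal_subset_ideal2_power[OF J_ideal Mxy yJ])
  also have "\<dots> \<subseteq> J (Suc m)"
    using ideal2_least[OF J_ideal ind_in[of "Suc m"] yJ] unfolding m .
  finally show ?thesis using that by blast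
qed

end

text \<open>For a prime \<open>Q\<close> this is the contraction of \<open>p\<^sup>m R\<^sub>Q\<close> to \<open>R\<close>.\<close>
definition symbolic_power :: "'a::idom set \<Rightarrow> 'a \<Rightarrow> nat \<Rightarrow> 'a set" where
  "symbolic_power Q p m = {r. \<exists>s. s \<notin> Q \<and> p ^ m dvd s * r}"

lemma prime_ideal_one_notin: "prime_ideal Q \<Longrightarrow> 1 \<notin> Q"
  unfolding prime_ideal_def using is_ideal_eq_UNIV_iff by blast

lemma prime_ideal_power: "prime_ideal Q \<Longrightarrow> x ^ n \<in> Q \<Longrightarrow> x \<in> Q"
  by (induction n) (auto simp: prime_ideal_one_notin, auto simp: prime_ideal_def)

lemma is_ideal_symbolic_power:
  assumes Q: "prime_ideal Q" shows "is_ideal (symbolic_power Q p m)"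
  unfolding is_ideal_def symbolic_power_def
proof (intro conjI ballI allI)
  show "0 \<in> {r. \<exists>s. s \<notin> Q \<and> p ^ m dvd s * r}"
    using prime_ideal_one_notin[OF Q] by auto
  fix u v assume "u \<in> {r. \<exists>s. s \<notin> Q \<and> p ^ m dvd s * r}" "v \<in> {r. \<exists>s. s \<notin> Q \<and> p ^ m dvd s * r}"
  then obtain s1 s2 where s: "s1 \<notin> Q" "p ^ m dvd s1 * u" "s2 \<notin> Q" "p ^ m dvd s2 * v"
    by blast
  have "s1 * s2 \<notin> Q" using s Q unfolding prime_ideal_def by blast
  moreover have "(s1 * s2) * (u + v) = s2 * (s1 * u) + s1 * (s2 * v)"
    by (simp add: algebra_simps)
  then have "p ^ m dvd (s1 * s2) * (u + v)" using s by (simp add: dvd_add dvd_mult)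
  ultimately show "u + v \<in> {r. \<exists>s. s \<notin> Q \<and> p ^ m dvd s * r}" by blast
next
  fix r u assume "u \<in> {r. \<exists>s. s \<notin> Q \<and> p ^ m dvd s * r}"
  then obtain s where "s \<notin> Q" "p ^ m dvd s * u" by blast
  then show "r * u \<in> {r. \<exists>s. s \<notin> Q \<and> p ^ m dvd s * r}"
    by (auto intro!: exI[of _ s] simp: mult.left_commute[of s r])
qed

lemma symbolic_power_Suc_subset: "symbolic_power Q p (Suc m) \<subseteq> symbolic_power Q p m"
  unfolding symbolic_power_def using dvd_trans[OF le_imp_power_dvd[of m "Suc m" p]] by auto

lemma power_in_symbolic_power: "prime_ideal Q \<Longrightarrow> p ^ m \<in> symbolic_power Q p m"
  unfolding symbolic_power_def using prime_ideal_one_notin by (auto intro!: exI[of _ 1])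

lemma power_notin_symbolic_power_Suc:
  assumes Q: "prime_ideal Q" and p: "p \<in> Q" "p \<noteq> 0"
  shows "p ^ m \<notin> symbolic_power Q p (Suc m)"
proof
  assume "p ^ m \<in> symbolic_power Q p (Suc m)"
  then obtain s where s: "s \<notin> Q" "p ^ Suc m dvd s * p ^ m"
    unfolding symbolic_power_def by blast
  then obtain k where "s * p ^ m = p ^ Suc m * k" by (elim dvdE)
  then have "p ^ m * s = p ^ m * (p * k)" by (simp add: algebra_simps)
  then have "s = p * k" using p(2) by simp
  then show False using s(1) p(1) Q unfolding prime_ideal_def is_ideal_def by (metis mult.commute)
qed

lemma symbolic_power_cancel:
  assumes Q: "prime_ideal Q" and "y \<notin> Q" "y * t \<in> symbolic_power Q p m"
  shows "t \<in> symbolic_power Q p m"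
proof -
  obtain s where s: "s \<notin> Q" "p ^ m dvd s * (y * t)"
    using assms(3) unfolding symbolic_power_def by blast
  have "s * y \<notin> Q" using s(1) assms(2) Q unfolding prime_ideal_def by blast
  then show ?thesis using s(2) unfolding symbolic_power_def by (auto simp: mult.assoc)
qed

section \<open>Two-dimensional regular local rings\<close>

locale regular_local_ring_2 = noetherian_local_ring M for M :: "'a::idom set" +
  fixes \<pi> \<delta> :: 'a
  assumes dim2: "krull_dim TYPE('a) = 2" and M_eq: "M = ideal2 \<pi> \<delta>"
begin

lemma pi_in_M: "\<pi> \<in> M" and delta_in_M: "\<delta> \<in> M"
  using M_eq ideal2_left ideal2_right by blast+

lemma M_memE:
  assumes "x \<in> M" obtains r s where "x = r * \<pi> + s * \<delta>"
  using assms unfolding M_eq ideal2_def by blast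

lemma prime_between_zero_and_M:
  obtains Q p where "prime_ideal Q" "p \<in> Q" "p \<noteq> 0" "Q \<subseteq> M" "Q \<noteq> M"
proof -
  let ?S = "{enat n | n. \<exists>P :: nat \<Rightarrow> 'a set.
              (\<forall>i\<le>n. prime_ideal (P i)) \<and> (\<forall>i<n. P i \<subset> P (Suc i))}"
  have "\<exists>e\<in>?S. 2 \<le> e"
  proof (rule ccontr)
    assume "\<not> (\<exists>e\<in>?S. 2 \<le> e)"
    moreover have "(e::enat) < 2 \<Longrightarrow> e \<le> 1" for e
      by (cases e) (auto simp: one_enat_def numeral_eq_enat)
    ultimately have "\<forall>e\<in>?S. e \<le> 1" by (meson not_le)
    then have "Sup ?S \<le> 1" by (intro Sup_least) blast
    then show False using dim2 unfolding krull_dim_def by (simp add: one_enat_def numeral_eq_enat)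
  qed
  then obtain n and P :: "nat \<Rightarrow> 'a set"
    where P: "2 \<le> n" "\<forall>i\<le>n. prime_ideal (P i)" "\<forall>i<n. P i \<subset> P (Suc i)"
    by (auto simp: numeral_eq_enat)
  have prime: "prime_ideal (P 0)" "prime_ideal (P 1)" "prime_ideal (P 2)"
    and chain: "P 0 \<subset> P 1" "P 1 \<subset> P 2"
    using P by (auto simp: numeral_2_eq_2)
  obtain p where "p \<in> P 1" "p \<notin> P 0" using chain(1) by blast
  moreover have "0 \<in> P 0" using prime(1) is_ideal_0 unfolding prime_ideal_def by blast
  moreover have "P 2 \<subseteq> M"
    using prime(3) proper_ideal_subset_M prime_ideal_one_notin unfolding prime_ideal_def by blast
  ultimately show ?thesis using that[of "P 1" p] prime(2) chain(2) by auto
qed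

lemma generator_notin_prime:
  assumes Mxy: "M = ideal2 x y" and dvd: "y dvd x ^ n"
    and Q: "prime_ideal Q" "Q \<subseteq> M" "Q \<noteq> M"
  shows "y \<notin> Q"
proof
  assume "y \<in> Q"
  have Q_ideal: "is_ideal Q" using Q(1) unfolding prime_ideal_def by blast
  obtain k where "x ^ n = y * k" using dvd by (elim dvdE)
  then have "x ^ n \<in> Q" using is_ideal_mult_right[OF Q_ideal \<open>y \<in> Q\<close>] by simp
  then have "x \<in> Q" by (rule prime_ideal_power[OF Q(1)])
  then have "M \<subseteq> Q" unfolding Mxy by (rule ideal2_least[OF Q_ideal _ \<open>y \<in> Q\<close>])
  then show False using Q(2,3) by blast
qed

text \<open>A weak form of Krull's principal ideal theorem: otherwise \<open>M\<close> would be minimal over \<open>(y)\<close>.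
  Take a prime \<open>0 \<noteq> Q \<subset> M\<close>, \<open>0 \<noteq> p \<in> Q\<close> and \<open>S\<^sub>m = p\<^sup>m R\<^sub>Q \<inter> R\<close>. Modulo \<open>y\<close>, \<open>M\<close> is
  generated by \<open>x\<close>, nilpotent there, so the ideals \<open>S\<^sub>m + (y)\<close> are of the form \<open>(x\<^sup>i, y)\<close> with
  bounded \<open>i\<close> and two consecutive ones coincide. Then \<open>S\<^sub>m \<subseteq> S\<^sub>m\<^sub>+\<^sub>1 + y S\<^sub>m\<close>, and Nakayama
  gives \<open>S\<^sub>m = S\<^sub>m\<^sub>+\<^sub>1\<close>, which fails for \<open>p\<^sup>m\<close>.\<close>
lemma ideal2_generator_not_dvd_power:
  assumes Mxy: "M = ideal2 x y" shows "\<not> y dvd x ^ n"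
proof
  assume dvd: "y dvd x ^ n"
  obtain Q p where Q: "prime_ideal Q" "p \<in> Q" "p \<noteq> 0" "Q \<subseteq> M" "Q \<noteq> M"
    by (rule prime_between_zero_and_M)
  obtain k where xy: "x ^ n = y * k" using dvd by (elim dvdE)
  have yQ: "y \<notin> Q" using generator_notin_prime[OF Mxy dvd Q(1,4,5)] .
  define S where "S = symbolic_power Q p"
  have S_ideal: "is_ideal (S m)" for m unfolding S_def by (rule is_ideal_symbolic_power[OF Q(1)])
  define J where "J m = {y * t + q | t q. q \<in> S m}" for m
  have J_ideal: "is_ideal (J m)" for m
    using is_ideal_lincomb[OF S_ideal, of y 1 m] unfolding J_def by simp
  have S_J: "q \<in> J m" if "q \<in> S m" for q m
  proof -
    have "q = y * 0 + q" by simp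
    then show ?thesis unfolding J_def using that by blast
  qed
  have yJ: "y \<in> J m" for m
  proof -
    have "y = y * 1 + 0" by simp
    then show ?thesis unfolding J_def using is_ideal_0[OF S_ideal] by blast
  qed
  have xJ: "x ^ n \<in> J m" for m unfolding xy by (rule is_ideal_mult_right[OF J_ideal yJ])
  have J_Suc: "J (Suc m) \<subseteq> J m" for m
    unfolding J_def S_def using symbolic_power_Suc_subset by blast
  obtain m where J_eq: "J m \<subseteq> J (Suc m)"
    by (rule descending_ideals_stabilize[of x y J n, OF Mxy J_ideal J_Suc yJ xJ])
  have H: "\<forall>g\<in>S m. \<exists>l\<in>S (Suc m). \<exists>h\<in>S m. g = l + y * h"
  proof
    fix g assume g: "g \<in> S m"
    then have "g \<in> J (Suc m)" using S_J J_eq by blast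
    then obtain t q where qt: "g = y * t + q" "q \<in> S (Suc m)" unfolding J_def by blast
    have "y * t = g - q" using qt by simp
    also have "\<dots> \<in> S m"
      using is_ideal_diff[OF S_ideal g] qt symbolic_power_Suc_subset unfolding S_def by blast
    finally have "t \<in> S m" unfolding S_def by (rule symbolic_power_cancel[OF Q(1) yQ])
    then show "\<exists>l\<in>S (Suc m). \<exists>h\<in>S m. g = l + y * h" using qt by (auto simp: add.commute)
  qed
  obtain G where G: "finite G" "gen_ideal G = S m"
    using noetherian_ring_finitely_generated[OF noeth S_ideal] by blast
  have "y \<in> M" unfolding Mxy by (rule ideal2_right)
  from nakayama[OF S_ideal[of "Suc m"] this G(1)] H have "S m \<subseteq> S (Suc m)"
    unfolding G(2) by blast
  then show False
    using power_in_symbolic_power[OF Q(1)] power_notin_symbolic_power_Suc[OF Q(1-3)]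
    unfolding S_def by blast
qed

lemma delta_not_dvd_pi_power: "\<not> \<delta> dvd \<pi> ^ n"
  using ideal2_generator_not_dvd_power[OF M_eq] .

lemma pi_not_dvd_delta_power: "\<not> \<pi> dvd \<delta> ^ n"
  by (rule ideal2_generator_not_dvd_power) (use M_eq ideal2_commute in blast)

lemma pi_nonzero: "\<pi> \<noteq> 0"
  using delta_not_dvd_pi_power[of 1] by auto

lemma delta_nonzero: "\<delta> \<noteq> 0"
  using pi_not_dvd_delta_power[of 1] by auto

text \<open>The ideals \<open>(\<delta>) : \<pi>\<^sup>n\<close> become stationary at some \<open>N\<close>. Since \<open>\<pi>\<close> is not nilpotent
  modulo \<open>\<delta>\<close>, one can write \<open>s \<equiv> \<pi>\<^sup>k s\<^sub>k\<close> modulo \<open>\<delta>\<close> with \<open>s\<^sub>k \<in> (\<delta>) : \<pi>\<^sup>k\<^sup>+\<^sup>1\<close> for every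
  \<open>k\<close>; at \<open>k = N\<close> this gives \<open>\<delta> | \<pi>\<^sup>N s\<^sub>N\<close>, hence \<open>\<delta> | s\<close>.\<close>
lemma delta_dvd_cancel_pi:
  assumes "\<delta> dvd \<pi> * s" shows "\<delta> dvd s"
proof -
  define A where "A n = {z. \<delta> dvd \<pi> ^ n * z}" for n
  have A_ideal: "is_ideal (A n)" for n
    unfolding A_def by (rule is_ideal_dvd_mult)
  have "A n \<subseteq> A (Suc n)" for n
  proof
    fix z assume "z \<in> A n"
    then have "\<delta> dvd \<pi> * (\<pi> ^ n * z)" unfolding A_def by (simp add: dvd_mult)
    then show "z \<in> A (Suc n)" unfolding A_def by (simp add: algebra_simps)
  qed
  then obtain N where N: "A (Suc N) = A N"
    using noetherian_ring_stabilizes_Suc[OF noeth A_ideal] by blast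
  have "\<exists>s'. \<delta> dvd s - \<pi> ^ k * s' \<and> \<delta> dvd \<pi> ^ Suc k * s'" for k
  proof (induction k)
    case 0
    show ?case using assms by (intro exI[of _ s]) simp
  next
    case (Suc k)
    then obtain s' where s': "\<delta> dvd s - \<pi> ^ k * s'" "\<delta> dvd \<pi> ^ Suc k * s'" by blast
    have "s' \<in> M"
    proof (rule ccontr)
      assume "s' \<notin> M"
      then obtain w where "s' * w = 1" using notin_M_iff by (metis dvdE)
      moreover have "\<delta> dvd s' * \<pi> ^ Suc k" using s'(2) by (simp add: mult.commute)
      ultimately have "\<delta> dvd \<pi> ^ Suc k" by (rule dvd_mult_unit_cancel)
      then show False using delta_not_dvd_pi_power by blast
    qed
    then obtain r1 r2 where r: "s' = r1 * \<pi> + r2 * \<delta>" by (rule M_memE)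
    have e1: "s - \<pi> ^ Suc k * r1 = (s - \<pi> ^ k * s') + \<delta> * (\<pi> ^ k * r2)"
      using r by (simp add: algebra_simps)
    have e2: "\<pi> ^ Suc (Suc k) * r1 = \<pi> ^ Suc k * s' - \<delta> * (\<pi> ^ Suc k * r2)"
      using r by (simp add: algebra_simps)
    have "\<delta> dvd s - \<pi> ^ Suc k * r1" unfolding e1 by (rule dvd_add[OF s'(1)]) simp
    moreover have "\<delta> dvd \<pi> ^ Suc (Suc k) * r1" unfolding e2 by (rule dvd_diff[OF s'(2)]) simp
    ultimately show ?case by blast
  qed
  then obtain s' where s': "\<delta> dvd s - \<pi> ^ N * s'" "\<delta> dvd \<pi> ^ Suc N * s'" by blast
  have "s' \<in> A (Suc N)" using s'(2) unfolding A_def by simp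
  then have "s' \<in> A N" unfolding N .
  then have "\<delta> dvd \<pi> ^ N * s'" unfolding A_def by simp
  then have "\<delta> dvd (s - \<pi> ^ N * s') + \<pi> ^ N * s'" by (rule dvd_add[OF s'(1)])
  then show ?thesis by simp
qed

lemma delta_dvd_cancel_pi_power: "\<delta> dvd \<pi> ^ i * s \<Longrightarrow> \<delta> dvd s"
proof (induction i arbitrary: s)
  case (Suc i)
  have "\<pi> ^ Suc i * s = \<pi> ^ i * (\<pi> * s)" by (simp add: algebra_simps)
  then have "\<delta> dvd \<pi> * s" using Suc by metis
  then show ?case by (rule delta_dvd_cancel_pi)
qed simp

text \<open>Krull's intersection theorem for the ideals \<open>(\<pi>\<^sup>n, \<delta>)\<close>: a sequence \<open>g \<equiv> \<pi>\<^sup>n Y\<^sub>n\<close>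
  modulo \<open>\<delta>\<close> has \<open>Y\<^sub>n \<equiv> \<pi> Y\<^sub>n\<^sub>+\<^sub>1\<close>, so the ideals \<open>(Y\<^sub>n, \<delta>)\<close> increase; where they become
  stationary, \<open>Y\<^sub>n\<^sub>+\<^sub>1 \<in> (\<pi> Y\<^sub>n\<^sub>+\<^sub>1, \<delta>)\<close> forces \<open>\<delta> | Y\<^sub>n\<^sub>+\<^sub>1\<close>.\<close>
lemma delta_dvd_if_in_ideal2_pi_powers:
  assumes "\<And>n. g \<in> ideal2 (\<pi> ^ n) \<delta>"
  shows "\<delta> dvd g"
proof -
  have "\<forall>n. \<exists>y. \<delta> dvd g - \<pi> ^ n * y"
  proof
    fix n
    obtain r s where "g = r * \<pi> ^ n + s * \<delta>" using assms[of n] unfolding ideal2_def by blast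
    then have "g - \<pi> ^ n * r = \<delta> * s" by (simp add: algebra_simps)
    then show "\<exists>y. \<delta> dvd g - \<pi> ^ n * y" by (metis dvd_triv_left)
  qed
  from choice[OF this] obtain Y where Y: "\<forall>n. \<delta> dvd g - \<pi> ^ n * Y n" by blast
  have Y_step: "\<delta> dvd Y n - \<pi> * Y (Suc n)" for n
  proof -
    have "\<pi> ^ n * (Y n - \<pi> * Y (Suc n)) = (g - \<pi> ^ Suc n * Y (Suc n)) - (g - \<pi> ^ n * Y n)"
      by (simp add: algebra_simps)
    moreover have "\<delta> dvd (g - \<pi> ^ Suc n * Y (Suc n)) - (g - \<pi> ^ n * Y n)"
      using Y by (blast intro: dvd_diff)
    ultimately have "\<delta> dvd \<pi> ^ n * (Y n - \<pi> * Y (Suc n))" by simp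
    then show ?thesis by (rule delta_dvd_cancel_pi_power)
  qed
  define B where "B n = ideal2 (Y n) \<delta>" for n
  have "B n \<subseteq> B (Suc n)" for n
    unfolding B_def
  proof (rule ideal2_least[OF is_ideal_ideal2 _ ideal2_right])
    obtain k where "Y n - \<pi> * Y (Suc n) = \<delta> * k" using Y_step[of n] by (elim dvdE)
    then have "Y n = \<delta> * k + \<pi> * Y (Suc n)" by (simp add: diff_eq_eq)
    then have "Y n = \<pi> * Y (Suc n) + k * \<delta>" by (simp add: algebra_simps)
    then show "Y n \<in> ideal2 (Y (Suc n)) \<delta>" unfolding ideal2_def by blast
  qed
  then obtain N where N: "B (Suc N) = B N"
    using noetherian_ring_stabilizes_Suc[OF noeth, of B] is_ideal_ideal2 unfolding B_def by blast
  have "Y (Suc N) \<in> ideal2 (Y N) \<delta>" using ideal2_left[of "Y (Suc N)" \<delta>] N unfolding B_def by simp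
  then obtain c t where ct: "Y (Suc N) = c * Y N + t * \<delta>" unfolding ideal2_def by blast
  obtain k where "Y N - \<pi> * Y (Suc N) = \<delta> * k" using Y_step[of N] by (elim dvdE)
  then have k: "Y N = \<delta> * k + \<pi> * Y (Suc N)" by (simp add: diff_eq_eq)
  have eq: "Y (Suc N) = c * (\<delta> * k + \<pi> * Y (Suc N)) + t * \<delta>" using ct unfolding k .
  have "(1 - c * \<pi>) * Y (Suc N) - \<delta> * (c * k + t)
      = Y (Suc N) - (c * (\<delta> * k + \<pi> * Y (Suc N)) + t * \<delta>)"
    by (simp add: algebra_simps)
  also have "\<dots> = 0" using eq by (rule right_minus_eq[THEN iffD2])
  finally have "(1 - c * \<pi>) * Y (Suc N) = \<delta> * (c * k + t)" by (rule right_minus_eq[THEN iffD1])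
  then have "\<delta> dvd (1 - c * \<pi>) * Y (Suc N)" by simp
  moreover obtain w where "(1 - c * \<pi>) * w = 1"
    using unit_one_minus[OF pi_in_M, of c] by (metis dvdE)
  ultimately have "\<delta> dvd Y (Suc N)" using dvd_mult_unit_cancel by blast
  then have "\<delta> dvd Y N" unfolding k by simp
  then have "\<delta> dvd (g - \<pi> ^ N * Y N) + \<pi> ^ N * Y N" using Y by (blast intro: dvd_add dvd_mult)
  then show ?thesis by simp
qed

text \<open>Krull's intersection theorem for \<open>(\<delta>)\<close>: writing \<open>x = \<delta>\<^sup>n Z\<^sub>n\<close>, the ideals \<open>(Z\<^sub>n)\<close>
  increase, and where they become stationary \<open>Z\<^sub>N\<^sub>+\<^sub>1 = c \<delta> Z\<^sub>N\<^sub>+\<^sub>1\<close> with \<open>1 - c \<delta>\<close> a unit.\<close>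
lemma delta_powers_dvd_imp_zero:
  assumes "\<And>n. \<delta> ^ n dvd x" shows "x = 0"
proof -
  have "\<forall>n. \<exists>z. x = \<delta> ^ n * z" using assms unfolding dvd_def by blast
  from choice[OF this] obtain Z where Z: "\<And>n. x = \<delta> ^ n * Z n" by blast
  have Z_Suc: "Z n = \<delta> * Z (Suc n)" for n
  proof -
    have "\<delta> ^ n * Z n = \<delta> ^ Suc n * Z (Suc n)" using Z[of n] Z[of "Suc n"] by (rule trans[OF sym])
    also have "\<dots> = \<delta> ^ n * (\<delta> * Z (Suc n))" by (simp add: ac_simps)
    finally have "\<delta> ^ n * Z n = \<delta> ^ n * (\<delta> * Z (Suc n))" .
    then show ?thesis using delta_nonzero by simp
  qed
  define C where "C n = {y. Z n dvd y}" for n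
  have "C n \<subseteq> C (Suc n)" for n
  proof
    fix y assume "y \<in> C n"
    moreover have "Z (Suc n) dvd Z n" unfolding Z_Suc[of n] by (rule dvd_triv_right)
    ultimately show "y \<in> C (Suc n)" unfolding C_def using dvd_trans by blast
  qed
  then obtain N where "C (Suc N) = C N"
    using noetherian_ring_stabilizes_Suc[OF noeth, of C] is_ideal_multiples unfolding C_def by blast
  moreover have "Z (Suc N) \<in> C (Suc N)" unfolding C_def by simp
  ultimately have "Z N dvd Z (Suc N)" unfolding C_def by simp
  then obtain c where "Z (Suc N) = Z N * c" by (elim dvdE)
  also have "Z N * c = (c * \<delta>) * Z (Suc N)" by (subst Z_Suc[of N]) (simp add: ac_simps)
  finally have "Z (Suc N) - (c * \<delta>) * Z (Suc N) = 0" by (rule right_minus_eq[THEN iffD2])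
  then have "(1 - c * \<delta>) * Z (Suc N) = 0" by (simp add: algebra_simps)
  moreover have "1 - c * \<delta> \<noteq> 0" using unit_one_minus[OF delta_in_M, of c] by auto
  ultimately show ?thesis using Z[of "Suc N"] by simp
qed

end

section \<open>The monomial valuation\<close>

lemma ceiling_multiple:
  fixes a n :: nat assumes "a > 0"
  obtains p where "n \<le> a * p" "a * p < n + a"
proof
  define p where "p = (n + a - 1) div a"
  have "n + a - 1 = a * p + (n + a - 1) mod a" unfolding p_def by simp
  moreover have "(n + a - 1) mod a < a" using assms by simp
  ultimately show "n \<le> a * p" "a * p < n + a" by linarith+
qed

locale weighted_regular_local_ring = regular_local_ring_2 M \<pi> \<delta> for M \<pi> \<delta> +
  fixes a b :: nat
  assumes a_pos: "a > 0" and b_pos: "b > 0"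
begin

definition weight_ideal :: "nat \<Rightarrow> 'a set" where
  "weight_ideal n = gen_ideal {\<pi> ^ i * \<delta> ^ j | i j. n \<le> a * i + b * j}"

lemma is_ideal_weight_ideal: "is_ideal (weight_ideal n)"
  unfolding weight_ideal_def by (rule is_ideal_gen_ideal)

lemma monomial_in_weight_ideal:
  assumes "n \<le> a * i + b * j" shows "\<pi> ^ i * \<delta> ^ j \<in> weight_ideal n"
proof -
  have "\<pi> ^ i * \<delta> ^ j \<in> {\<pi> ^ i * \<delta> ^ j | i j. n \<le> a * i + b * j}"
    using assms by (intro CollectI exI[of _ i] exI[of _ j]) simp
  then show ?thesis unfolding weight_ideal_def by (rule subsetD[OF gen_ideal_subset])
qed

lemma weight_ideal_least:
  assumes "is_ideal S" "\<And>i j. n \<le> a * i + b * j \<Longrightarrow> \<pi> ^ i * \<delta> ^ j \<in> S"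
  shows "weight_ideal n \<subseteq> S"
  unfolding weight_ideal_def using assms by (intro gen_ideal_least) auto

lemma weight_ideal_antimono: "m \<le> n \<Longrightarrow> weight_ideal n \<subseteq> weight_ideal m"
  by (rule weight_ideal_least[OF is_ideal_weight_ideal monomial_in_weight_ideal]) simp

lemma weight_ideal_0: "weight_ideal 0 = UNIV"
  using monomial_in_weight_ideal[of 0 0 0] is_ideal_eq_UNIV_iff[OF is_ideal_weight_ideal] by simp

lemma pi_in_weight_ideal: "\<pi> \<in> weight_ideal a"
  using monomial_in_weight_ideal[of a 1 0] by simp

lemma delta_in_weight_ideal: "\<delta> \<in> weight_ideal b"
  using monomial_in_weight_ideal[of b 0 1] by simp

lemma weight_ideal_mult:
  assumes "x \<in> weight_ideal n" "y \<in> weight_ideal m"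
  shows "x * y \<in> weight_ideal (n + m)"
proof -
  have monomials: "\<pi> ^ i * \<delta> ^ j * (\<pi> ^ i' * \<delta> ^ j') \<in> weight_ideal (n + m)"
    if "n \<le> a * i + b * j" "m \<le> a * i' + b * j'" for i j i' j'
    using monomial_in_weight_ideal[of "n + m" "i + i'" "j + j'"] that
    by (simp add: power_add algebra_simps)
  note ideal = is_ideal_mult_preimage[OF is_ideal_weight_ideal]
  have "\<pi> ^ i * \<delta> ^ j * y \<in> weight_ideal (n + m)" if "n \<le> a * i + b * j" for i j
    using weight_ideal_least[OF ideal, of m "\<pi> ^ i * \<delta> ^ j"] monomials[OF that] assms(2) by blast
  then have "weight_ideal n \<subseteq> {x. y * x \<in> weight_ideal (n + m)}"
    by (intro weight_ideal_least[OF ideal]) (simp add: mult.commute)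
  then show ?thesis using assms(1) by (auto simp: mult.commute)
qed

lemma weight_ideal_1: "weight_ideal 1 = M"
proof
  show "M \<subseteq> weight_ideal 1" unfolding M_eq
    using monomial_in_weight_ideal[of 1 1 0] monomial_in_weight_ideal[of 1 0 1] a_pos b_pos
    by (intro ideal2_least[OF is_ideal_weight_ideal]) auto
  show "weight_ideal 1 \<subseteq> M"
  proof (rule weight_ideal_least[OF is_ideal_M])
    fix i j assume "1 \<le> a * i + b * j"
    then consider i' where "i = Suc i'" | j' where "j = Suc j'" by (cases i; cases j) auto
    then show "\<pi> ^ i * \<delta> ^ j \<in> M"
    proof cases
      case 1
      then have "\<pi> ^ i * \<delta> ^ j = (\<pi> ^ i' * \<delta> ^ j) * \<pi>" by (simp add: ac_simps)
      then show ?thesis using is_ideal_mult_left[OF is_ideal_M pi_in_M] by metis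
    next
      case 2
      then have "\<pi> ^ i * \<delta> ^ j = (\<pi> ^ i * \<delta> ^ j') * \<delta>" by (simp add: ac_simps)
      then show ?thesis using is_ideal_mult_left[OF is_ideal_M delta_in_M] by metis
    qed
  qed
qed

lemma M_mult_weight_ideal: "c \<in> M \<Longrightarrow> x \<in> weight_ideal k \<Longrightarrow> c * x \<in> weight_ideal (Suc k)"
  using weight_ideal_mult[of c 1 x k] weight_ideal_1 by simp

lemma weight_ideal_split:
  assumes "a * p < n + a"
  shows "weight_ideal n \<subseteq> {\<pi> ^ p * r + \<delta> * x | r x. x \<in> weight_ideal (n - b)}"
proof (rule weight_ideal_least[OF is_ideal_lincomb[OF is_ideal_weight_ideal]])
  fix i j assume ij: "n \<le> a * i + b * j"
  show "\<pi> ^ i * \<delta> ^ j \<in> {\<pi> ^ p * r + \<delta> * x | r x. x \<in> weight_ideal (n - b)}"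
  proof (cases j)
    case 0
    then have "a * p < a * Suc i" using ij assms by simp
    then have "p \<le> i" unfolding mult_less_cancel1 by simp
    then have "\<pi> ^ i * \<delta> ^ j = \<pi> ^ p * \<pi> ^ (i - p) + \<delta> * 0"
      using 0 by (simp add: power_add[symmetric])
    then show ?thesis using is_ideal_0[OF is_ideal_weight_ideal] by blast
  next
    case (Suc j')
    then have "\<pi> ^ i * \<delta> ^ j = \<pi> ^ p * 0 + \<delta> * (\<pi> ^ i * \<delta> ^ j')" by simp
    moreover have "\<pi> ^ i * \<delta> ^ j' \<in> weight_ideal (n - b)"
      using ij Suc by (intro monomial_in_weight_ideal) simp
    ultimately show ?thesis by blast
  qed
qed

lemma weight_ideal_delta_cancel:
  assumes "\<delta> * x \<in> weight_ideal (m + b)" shows "x \<in> weight_ideal m"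
proof -
  obtain p where p: "m + b \<le> a * p" "a * p < m + b + a" using ceiling_multiple[OF a_pos] by blast
  obtain r x' where rx: "\<delta> * x = \<pi> ^ p * r + \<delta> * x'" "x' \<in> weight_ideal m"
    using weight_ideal_split[OF p(2)] assms by auto
  have "\<pi> ^ p * r = \<delta> * (x - x')" using rx(1) by (simp add: algebra_simps)
  then have "\<delta> dvd \<pi> ^ p * r" by simp
  then have "\<delta> dvd r" by (rule delta_dvd_cancel_pi_power)
  then obtain r' where r': "r = \<delta> * r'" by (elim dvdE)
  have "\<delta> * x = \<delta> * (\<pi> ^ p * r' + x')" using rx(1) r' by (simp add: algebra_simps)
  then have "x = \<pi> ^ p * r' + x'" using delta_nonzero by simp
  moreover have "\<pi> ^ p \<in> weight_ideal m" using monomial_in_weight_ideal[of m p 0] p(1) by simp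
  ultimately show ?thesis
    using is_ideal_add[OF is_ideal_weight_ideal is_ideal_mult_right[OF is_ideal_weight_ideal] rx(2)]
    by simp
qed

lemma weight_ideal_delta_power_cancel:
  "\<delta> ^ e * x \<in> weight_ideal (m + b * e) \<Longrightarrow> x \<in> weight_ideal m"
proof (induction e arbitrary: x)
  case (Suc e)
  then have "\<delta> * (\<delta> ^ e * x) \<in> weight_ideal ((m + b * e) + b)" by (simp add: algebra_simps)
  then show ?case by (rule Suc.IH[OF weight_ideal_delta_cancel])
qed simp

lemma weight_ideals_Inter:
  assumes "x \<noteq> 0" shows "\<exists>n. x \<notin> weight_ideal n"
proof (rule ccontr)
  assume "\<nexists>n. x \<notin> weight_ideal n"
  then have x_in: "x \<in> weight_ideal n" for n by blast
  have "\<exists>E. \<delta> ^ E dvd x \<and> \<not> \<delta> ^ Suc E dvd x"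
  proof (rule ccontr)
    assume "\<nexists>E. \<delta> ^ E dvd x \<and> \<not> \<delta> ^ Suc E dvd x"
    then have "\<delta> ^ n dvd x" for n by (induction n) auto
    then show False using delta_powers_dvd_imp_zero assms by blast
  qed
  then obtain E where E: "\<not> \<delta> ^ Suc E dvd x" "\<delta> ^ E dvd x" by blast
  then obtain g where g: "x = \<delta> ^ E * g" by (elim dvdE)
  have "\<delta> ^ E * g \<in> weight_ideal (n + b * E)" for n using x_in g by simp
  then have g_in: "g \<in> weight_ideal n" for n by (rule weight_ideal_delta_power_cancel)
  have "g \<in> ideal2 (\<pi> ^ n) \<delta>" for n
  proof -
    have "a * n < a * n + a" using a_pos by simp
    then obtain r t where "g = \<pi> ^ n * r + \<delta> * t"
      using weight_ideal_split g_in[of "a * n"] by blast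
    then have "g = r * \<pi> ^ n + t * \<delta>" by (simp add: mult.commute)
    then show ?thesis unfolding ideal2_def by blast
  qed
  then have "\<delta> dvd g" by (rule delta_dvd_if_in_ideal2_pi_powers)
  then have "\<delta> ^ E * \<delta> dvd \<delta> ^ E * g" by (rule mult_dvd_mono[OF dvd_refl])
  then show False using E(1) g by (simp add: power_Suc2)
qed

text \<open>\<open>initial_term x n i e\<close>: \<open>x\<close> has weight \<open>n = a i + b e\<close>, and its initial form in the
  associated graded ring \<open>k[\<pi>, \<delta>]\<close> is divisible by exactly \<open>\<delta>\<^sup>e\<close>, with \<open>\<pi>\<^sup>i\<delta>\<^sup>e\<close> occurring:
  \<open>x \<equiv> \<delta>\<^sup>e z\<close> modulo the next weight ideal, where \<open>z \<equiv> u \<pi>\<^sup>i\<close> modulo \<open>\<delta>\<close> for a unit \<open>u\<close>.\<close>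
definition initial_term :: "'a \<Rightarrow> nat \<Rightarrow> nat \<Rightarrow> nat \<Rightarrow> bool" where
  "initial_term x n i e \<longleftrightarrow> x \<in> weight_ideal n \<and> a * i + b * e = n \<and>
     (\<exists>z u. u \<notin> M \<and> \<delta> dvd z - u * \<pi> ^ i \<and> x - \<delta> ^ e * z \<in> weight_ideal (Suc n))"

lemma initial_term_delta_Suc:
  assumes "initial_term x' (n - b) i e" "b \<le> n" "x \<in> weight_ideal n"
    and "x - \<delta> * x' \<in> weight_ideal (Suc n)"
  shows "initial_term x n i (Suc e)"
proof -
  obtain z u where zu: "u \<notin> M" "\<delta> dvd z - u * \<pi> ^ i" "x' - \<delta> ^ e * z \<in> weight_ideal (Suc (n - b))"
    and w: "a * i + b * e = n - b" using assms(1) unfolding initial_term_def by blast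
  have "\<delta> * (x' - \<delta> ^ e * z) \<in> weight_ideal (Suc n)"
    using weight_ideal_mult[OF delta_in_weight_ideal zu(3)] assms(2) by (simp add: Suc_diff_le)
  then have "x - \<delta> * x' + \<delta> * (x' - \<delta> ^ e * z) \<in> weight_ideal (Suc n)"
    by (rule is_ideal_add[OF is_ideal_weight_ideal assms(4)])
  then have "x - \<delta> ^ Suc e * z \<in> weight_ideal (Suc n)" by (simp add: algebra_simps)
  moreover have "a * i + b * Suc e = n" using w assms(2) by simp
  ultimately show ?thesis unfolding initial_term_def using zu assms(3) by blast
qed

lemma pi_power_mult_in_next_weight_ideal:
  assumes "n \<le> a * p" "a * p = n \<Longrightarrow> r \<in> M"
  shows "\<pi> ^ p * r \<in> weight_ideal (Suc n)"
proof (cases "a * p = n")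
  case True
  then show ?thesis using assms(2) M_mult_weight_ideal[of r "\<pi> ^ p"] monomial_in_weight_ideal[of n p 0]
    by (simp add: mult.commute)
next
  case False
  then show ?thesis using assms(1) monomial_in_weight_ideal[of "Suc n" p 0]
    is_ideal_mult_right[OF is_ideal_weight_ideal] by simp
qed

lemma initial_term_exists:
  "x \<in> weight_ideal n \<Longrightarrow> x \<notin> weight_ideal (Suc n) \<Longrightarrow> \<exists>i e. initial_term x n i e"
proof (induction n arbitrary: x rule: less_induct)
  case (less n)
  obtain p where p: "n \<le> a * p" "a * p < n + a" using ceiling_multiple[OF a_pos] by blast
  obtain r x' where rx: "x = \<pi> ^ p * r + \<delta> * x'" "x' \<in> weight_ideal (n - b)"
    using weight_ideal_split[OF p(2)] less.prems(1) by blast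
  show ?case
  proof (cases "a * p = n \<and> r \<notin> M")
    case True
    have "\<delta> dvd x - r * \<pi> ^ p" using rx(1) by (simp add: algebra_simps)
    moreover have "x - \<delta> ^ 0 * x \<in> weight_ideal (Suc n)"
      using is_ideal_0[OF is_ideal_weight_ideal] by simp
    ultimately have "\<exists>z u. u \<notin> M \<and> \<delta> dvd z - u * \<pi> ^ p \<and> x - \<delta> ^ 0 * z \<in> weight_ideal (Suc n)"
      using True by blast
    then have "initial_term x n p 0" unfolding initial_term_def using True less.prems(1) by simp
    then show ?thesis by blast
  next
    case False
    have "\<pi> ^ p * r \<in> weight_ideal (Suc n)"
      using pi_power_mult_in_next_weight_ideal[OF p(1)] False by blast
    then have x_diff: "x - \<delta> * x' \<in> weight_ideal (Suc n)" using rx(1) by simp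
    have dx: "\<delta> * x' \<notin> weight_ideal (Suc n)"
      using is_ideal_add[OF is_ideal_weight_ideal x_diff] less.prems(2) by fastforce
    have nb: "b \<le> n"
    proof (rule ccontr)
      assume "\<not> b \<le> n"
      then have "\<delta> \<in> weight_ideal (Suc n)" using monomial_in_weight_ideal[of "Suc n" 0 1] by simp
      then show False using dx is_ideal_mult_right[OF is_ideal_weight_ideal] by blast
    qed
    have "x' \<notin> weight_ideal (Suc (n - b))"
      using weight_ideal_mult[OF delta_in_weight_ideal] dx nb by (metis Suc_diff_le add_Suc_right le_add_diff_inverse)
    moreover have "n - b < n" using nb b_pos by simp
    ultimately obtain i e where "initial_term x' (n - b) i e" using less.IH rx(2) by blast
    then show ?thesis using initial_term_delta_Suc nb less.prems(1) x_diff by blast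
  qed
qed

text \<open>This is where regularity enters: the associated graded ring is a domain, because \<open>\<delta>\<close>
  cancels against the weight ideals and \<open>\<pi>\<close> is a non-zero-divisor modulo \<open>\<delta>\<close>.\<close>
lemma initial_term_not_in_next:
  assumes "initial_term x n i e" shows "x \<notin> weight_ideal (Suc n)"
proof
  assume x: "x \<in> weight_ideal (Suc n)"
  obtain z u where zu: "u \<notin> M" "\<delta> dvd z - u * \<pi> ^ i" "x - \<delta> ^ e * z \<in> weight_ideal (Suc n)"
    and w: "a * i + b * e = n" using assms unfolding initial_term_def by blast
  have "\<delta> ^ e * z = x - (x - \<delta> ^ e * z)" by simp
  also have "\<dots> \<in> weight_ideal ((a * i + 1) + b * e)"
    using is_ideal_diff[OF is_ideal_weight_ideal x zu(3)] w by simp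
  finally have "z \<in> weight_ideal (a * i + 1)" by (rule weight_ideal_delta_power_cancel)
  moreover have "a * Suc i < a * i + 1 + a" by simp
  ultimately obtain r t where rt: "z = \<pi> ^ Suc i * r + \<delta> * t"
    using weight_ideal_split by blast
  obtain s where s: "z - u * \<pi> ^ i = \<delta> * s" using zu(2) by (elim dvdE)
  have "\<pi> ^ i * (u - \<pi> * r) = \<delta> * (t - s)" using rt s by (simp add: algebra_simps)
  then have "\<delta> dvd u - \<pi> * r" using delta_dvd_cancel_pi_power by (metis dvd_triv_left)
  then have "u - \<pi> * r \<in> M" using is_ideal_mult_right[OF is_ideal_M delta_in_M] by (auto elim: dvdE)
  then have "u - \<pi> * r + \<pi> * r \<in> M"
    by (rule is_ideal_add[OF is_ideal_M _ is_ideal_mult_right[OF is_ideal_M pi_in_M]])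
  then show False using zu(1) by simp
qed

lemma initial_term_mult:
  assumes "initial_term x n i e" "initial_term y m i' e'"
  shows "initial_term (x * y) (n + m) (i + i') (e + e')"
proof -
  obtain z u where zu: "u \<notin> M" "\<delta> dvd z - u * \<pi> ^ i" "x - \<delta> ^ e * z \<in> weight_ideal (Suc n)"
    and w: "a * i + b * e = n" and x: "x \<in> weight_ideal n"
    using assms(1) unfolding initial_term_def by blast
  obtain z' u' where zu': "u' \<notin> M" "\<delta> dvd z' - u' * \<pi> ^ i'" "y - \<delta> ^ e' * z' \<in> weight_ideal (Suc m)"
    and w': "a * i' + b * e' = m" and y: "y \<in> weight_ideal m"
    using assms(2) unfolding initial_term_def by blast
  have "u * u' \<notin> M" using zu(1) zu'(1) notin_M_iff mult_dvd_mono[of u 1 u' 1] by simp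
  moreover have "\<delta> dvd z * z' - (u * u') * \<pi> ^ (i + i')"
  proof -
    have "z * z' - (u * u') * \<pi> ^ (i + i') = (z - u * \<pi> ^ i) * z' + (u * \<pi> ^ i) * (z' - u' * \<pi> ^ i')"
      by (simp add: algebra_simps power_add)
    then show ?thesis using zu(2) zu'(2) by (simp add: dvd_add dvd_mult2 dvd_mult)
  qed
  moreover have "x * y - \<delta> ^ (e + e') * (z * z') \<in> weight_ideal (Suc (n + m))"
  proof -
    have "\<delta> ^ e * z = x - (x - \<delta> ^ e * z)" by simp
    also have "\<dots> \<in> weight_ideal n"
      by (rule is_ideal_diff[OF is_ideal_weight_ideal x])
        (use zu(3) weight_ideal_antimono[of n "Suc n"] in auto)
    finally have "(x - \<delta> ^ e * z) * y + (\<delta> ^ e * z) * (y - \<delta> ^ e' * z') \<in> weight_ideal (Suc (n + m))"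
      using weight_ideal_mult[OF zu(3) y] weight_ideal_mult[OF _ zu'(3)]
      by (intro is_ideal_add[OF is_ideal_weight_ideal]) simp_all
    then show ?thesis by (simp add: algebra_simps power_add)
  qed
  moreover have "x * y \<in> weight_ideal (n + m)" by (rule weight_ideal_mult[OF x y])
  moreover have "a * (i + i') + b * (e + e') = n + m" using w w' by (simp add: algebra_simps)
  ultimately show ?thesis unfolding initial_term_def by blast
qed

lemma weight_ideal_index_le: "x \<in> weight_ideal k \<Longrightarrow> x \<notin> weight_ideal (Suc n) \<Longrightarrow> k \<le> n"
  using weight_ideal_antimono[of "Suc n" k] by (cases "k \<le> n") auto

definition monomial_val :: "'a \<Rightarrow> int" where
  "monomial_val x = int (GREATEST n. x \<in> weight_ideal n)"

lemma monomial_val_eq: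
  assumes "x \<in> weight_ideal n" "x \<notin> weight_ideal (Suc n)"
  shows "monomial_val x = int n"
proof -
  have "(GREATEST n. x \<in> weight_ideal n) = n"
    using assms weight_ideal_index_le by (intro Greatest_equality) auto
  then show ?thesis unfolding monomial_val_def by simp
qed

lemma monomial_valE:
  assumes "x \<noteq> 0"
  obtains n where "x \<in> weight_ideal n" "x \<notin> weight_ideal (Suc n)" "monomial_val x = int n"
proof -
  obtain N where "x \<notin> weight_ideal N" using weight_ideals_Inter[OF assms] by blast
  then have N: "x \<notin> weight_ideal (Suc N)" using weight_ideal_antimono[of N "Suc N"] by auto
  have bound: "k \<le> N" if "x \<in> weight_ideal k" for k
    using weight_ideal_index_le[OF that N] .
  define n where "n = (GREATEST n. x \<in> weight_ideal n)"
  have "x \<in> weight_ideal n"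
    unfolding n_def
    by (rule GreatestI_nat[of "\<lambda>n. x \<in> weight_ideal n" 0 N]) (simp_all add: weight_ideal_0 bound)
  moreover have "x \<notin> weight_ideal (Suc n)"
    using Greatest_le_nat[of "\<lambda>n. x \<in> weight_ideal n" "Suc n" N] bound unfolding n_def by auto
  ultimately show ?thesis using that monomial_val_eq by blast
qed

lemma monomial_val_ge: "x \<noteq> 0 \<Longrightarrow> x \<in> weight_ideal k \<longleftrightarrow> int k \<le> monomial_val x"
proof (elim monomial_valE)
  fix n assume n: "x \<in> weight_ideal n" "x \<notin> weight_ideal (Suc n)" "monomial_val x = int n"
  show ?thesis
    using weight_ideal_index_le[OF _ n(2)] weight_ideal_antimono[of k n] n(1,3) by auto
qed

lemma monomial_val_nonneg: "monomial_val x \<ge> 0"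
  unfolding monomial_val_def by simp

lemma monomial_val_pos_iff: "x \<noteq> 0 \<Longrightarrow> monomial_val x > 0 \<longleftrightarrow> x \<in> M"
  using monomial_val_ge[of x 1] weight_ideal_1 by auto

lemma is_valuation_monomial_val: "is_valuation monomial_val"
  unfolding is_valuation_def
proof (intro conjI allI impI)
  fix x y :: 'a assume x: "x \<noteq> 0" and y: "y \<noteq> 0"
  obtain n where n: "x \<in> weight_ideal n" "x \<notin> weight_ideal (Suc n)" "monomial_val x = int n"
    using monomial_valE[OF x] by blast
  obtain m where m: "y \<in> weight_ideal m" "y \<notin> weight_ideal (Suc m)" "monomial_val y = int m"
    using monomial_valE[OF y] by blast
  obtain i e i' e' where "initial_term x n i e" "initial_term y m i' e'"
    using initial_term_exists n m by metis
  then have xy: "initial_term (x * y) (n + m) (i + i') (e + e')" by (rule initial_term_mult)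
  have "monomial_val (x * y) = int (n + m)"
  proof (rule monomial_val_eq)
    show "x * y \<in> weight_ideal (n + m)" using xy unfolding initial_term_def by blast
    show "x * y \<notin> weight_ideal (Suc (n + m))" using xy by (rule initial_term_not_in_next)
  qed
  then show "monomial_val (x * y) = monomial_val x + monomial_val y" using n(3) m(3) by simp
  assume xy: "x + y \<noteq> 0"
  have "x \<in> weight_ideal (min n m)" "y \<in> weight_ideal (min n m)"
    using n(1) m(1) weight_ideal_antimono[of "min n m" n] weight_ideal_antimono[of "min n m" m]
    by auto
  then have "x + y \<in> weight_ideal (min n m)" by (rule is_ideal_add[OF is_ideal_weight_ideal])
  then show "min (monomial_val x) (monomial_val y) \<le> monomial_val (x + y)"
    using monomial_val_ge[OF xy] n(3) m(3) by simp
qed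

lemma monomial_val_pi: "monomial_val \<pi> = int a"
proof -
  have "1 \<notin> M \<and> \<delta> dvd \<pi> - 1 * \<pi> ^ 1 \<and> \<pi> - \<delta> ^ 0 * \<pi> \<in> weight_ideal (Suc a)"
    using one_notin_M is_ideal_0[OF is_ideal_weight_ideal] by simp
  then have "\<exists>z u. u \<notin> M \<and> \<delta> dvd z - u * \<pi> ^ 1 \<and> \<pi> - \<delta> ^ 0 * z \<in> weight_ideal (Suc a)"
    by blast
  then have "initial_term \<pi> a 1 0"
    unfolding initial_term_def using pi_in_weight_ideal by simp
  then show ?thesis using monomial_val_eq[OF pi_in_weight_ideal initial_term_not_in_next] by blast
qed

lemma monomial_val_delta: "monomial_val \<delta> = int b"
proof -
  have "1 \<notin> M \<and> \<delta> dvd 1 - 1 * \<pi> ^ 0 \<and> \<delta> - \<delta> ^ 1 * 1 \<in> weight_ideal (Suc b)"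
    using one_notin_M is_ideal_0[OF is_ideal_weight_ideal] by simp
  then have "\<exists>z u. u \<notin> M \<and> \<delta> dvd z - u * \<pi> ^ 0 \<and> \<delta> - \<delta> ^ 1 * z \<in> weight_ideal (Suc b)"
    by blast
  then have "initial_term \<delta> b 0 1"
    unfolding initial_term_def using delta_in_weight_ideal by simp
  then show ?thesis using monomial_val_eq[OF delta_in_weight_ideal initial_term_not_in_next] by blast
qed

text \<open>Among the terms with a unit coefficient, the one of least \<open>\<delta>\<close>-degree is an initial term.\<close>
lemma homogeneous_sum_notin_weight_ideal:
  assumes S: "finite S" "\<And>i j. (i, j) \<in> S \<Longrightarrow> a * i + b * j = k"
    and unit: "(i0, j0) \<in> S" "c i0 j0 \<notin> M"
  shows "(\<Sum>(i, j)\<in>S. c i j * (\<pi> ^ i * \<delta> ^ j)) \<notin> weight_ideal (Suc k)"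
proof -
  define h where "h = (\<Sum>(i, j)\<in>S. c i j * (\<pi> ^ i * \<delta> ^ j))"
  define Su where "Su = {(i, j) \<in> S. c i j \<notin> M}"
  have Su_sub: "Su \<subseteq> S" unfolding Su_def by auto
  have Su: "finite Su" "Su \<subseteq> S" "(i0, j0) \<in> Su"
    using finite_subset[OF Su_sub S(1)] Su_sub unit unfolding Su_def by auto
  define e where "e = Min (snd ` Su)"
  have "e \<in> snd ` Su" unfolding e_def using Su by (intro Min_in) auto
  then obtain i where i: "(i, e) \<in> Su" by force
  have e_le: "e \<le> j" if "(i', j) \<in> Su" for i' j
    unfolding e_def using Su(1) by (rule Min_le[OF finite_imageI]) (use that in force)
  have i_unique: "i' = i" if "(i', e) \<in> Su" for i'
    using S(2) Su(2) that i a_pos by (metis add_right_cancel mult_left_cancel not_gr0 subsetD)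
  define z where "z = (\<Sum>(i', j)\<in>Su. c i' j * \<pi> ^ i' * \<delta> ^ (j - e))"
  have "h = (\<Sum>(i, j)\<in>S - Su. c i j * (\<pi> ^ i * \<delta> ^ j)) + (\<Sum>(i, j)\<in>Su. c i j * (\<pi> ^ i * \<delta> ^ j))"
    unfolding h_def using Su by (metis (no_types, lifting) S(1) add.commute sum.subset_diff)
  also have "(\<Sum>(i, j)\<in>Su. c i j * (\<pi> ^ i * \<delta> ^ j)) = \<delta> ^ e * z"
    unfolding z_def sum_distrib_left using e_le
    by (intro sum.cong) (auto simp: power_add[symmetric] algebra_simps)
  finally have "h - \<delta> ^ e * z = (\<Sum>(i, j)\<in>S - Su. c i j * (\<pi> ^ i * \<delta> ^ j))" by simp
  also have "\<dots> \<in> weight_ideal (Suc k)"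
    using S(2) unfolding Su_def
    by (intro is_ideal_sum[OF is_ideal_weight_ideal])
      (auto intro!: M_mult_weight_ideal monomial_in_weight_ideal)
  finally have hz: "h - \<delta> ^ e * z \<in> weight_ideal (Suc k)" .
  have "z - c i e * \<pi> ^ i = (\<Sum>(i', j)\<in>Su - {(i, e)}. c i' j * \<pi> ^ i' * \<delta> ^ (j - e))"
    unfolding z_def sum.remove[OF Su(1) i] by simp
  also have "\<delta> dvd \<dots>"
  proof (rule dvd_sum)
    fix ij assume ij: "ij \<in> Su - {(i, e)}"
    obtain i' j where [simp]: "ij = (i', j)" by fastforce
    have "e \<le> j" "(i', j) \<noteq> (i, e)" "(i', j) \<in> Su" using ij e_le by auto
    then have "e < j" using i_unique by fastforce
    then show "\<delta> dvd (case ij of (i', j) \<Rightarrow> c i' j * \<pi> ^ i' * \<delta> ^ (j - e))" by simp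
  qed
  finally have "initial_term h k i e"
    unfolding initial_term_def using i hz S(2) Su(2) h_def
    by (auto intro!: is_ideal_sum[OF is_ideal_weight_ideal] is_ideal_mult_left[OF is_ideal_weight_ideal]
        monomial_in_weight_ideal simp: Su_def)
  then show ?thesis unfolding h_def by (rule initial_term_not_in_next)
qed

end

section \<open>The valuation on \<open>K(T)\<close>\<close>

definition to_fract :: "'b::idom \<Rightarrow> 'b fract" where
  "to_fract p = Fract p 1"

lemma to_fract_add: "to_fract (x + y) = to_fract x + to_fract y"
  and to_fract_mult: "to_fract (x * y) = to_fract x * to_fract y"
  and to_fract_0: "to_fract 0 = 0"
  and to_fract_1: "to_fract 1 = 1"
  unfolding to_fract_def by (simp_all add: fract_collapse)

lemma to_fract_eq_0_iff: "to_fract x = 0 \<longleftrightarrow> x = 0"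
  unfolding to_fract_def Zero_fract_def by (simp add: eq_fract)

lemma to_fract_power: "to_fract (x ^ n) = to_fract x ^ n"
  by (induction n) (simp_all add: to_fract_1 to_fract_mult)

lemma to_fract_sum: "to_fract (sum f A) = (\<Sum>i\<in>A. to_fract (f i))"
  by (induction A rule: infinite_finite_induct) (simp_all add: to_fract_0 to_fract_add)

lemma embR_eq: "embR r = to_fract [:to_fract r:]"
  unfolding embR_def to_fract_def ..

lemma embR_add: "embR (x + y) = embR x + embR y"
proof -
  have "[:to_fract x + to_fract y:] = [:to_fract x:] + [:to_fract y:]" by simp
  then show ?thesis unfolding embR_eq by (simp only: to_fract_add)
qed

lemma embR_mult: "embR (x * y) = embR x * embR y"
proof -
  have "[:to_fract x * to_fract y:] = [:to_fract x:] * [:to_fract y:]" by simp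
  then show ?thesis unfolding embR_eq by (simp only: to_fract_mult)
qed

lemma embR_0: "embR 0 = 0" and embR_1: "embR 1 = 1"
  and embR_eq_0_iff: "embR x = 0 \<longleftrightarrow> x = 0"
  unfolding embR_eq by (simp_all add: to_fract_0 to_fract_1 to_fract_eq_0_iff one_pCons[symmetric])

lemma embR_power: "embR (x ^ n) = embR x ^ n"
  by (induction n) (simp_all add: embR_1 embR_mult)

lemma varT_eq: "varT = to_fract [:0, 1:]"
  unfolding varT_def to_fract_def ..

lemma varT_nonzero: "varT \<noteq> 0"
  unfolding varT_eq by (simp add: to_fract_eq_0_iff)

lemma to_fract_monom: "to_fract (monom c m) = to_fract [:c:] * varT ^ m"
proof -
  have "monom c m = [:c:] * [:0, 1:] ^ m" by (simp add: monom_altdef)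
  then show ?thesis unfolding varT_eq by (simp only: to_fract_mult to_fract_power)
qed

context weighted_regular_local_ring
begin

definition val_K :: "'a fract \<Rightarrow> int" where
  "val_K = frac_valuation monomial_val"

definition val_Kpoly :: "'a fract poly \<Rightarrow> int" where
  "val_Kpoly = gauss_valuation val_K"

definition val_KT :: "'a ratfun \<Rightarrow> int" where
  "val_KT = frac_valuation val_Kpoly"

lemma is_valuation_val_K: "is_valuation val_K"
  unfolding val_K_def by (rule is_valuation_frac_valuation[OF is_valuation_monomial_val])

lemma is_valuation_val_Kpoly: "is_valuation val_Kpoly"
  unfolding val_Kpoly_def by (rule is_valuation_gauss_valuation[OF is_valuation_val_K])

lemma is_valuation_val_KT: "is_valuation val_KT"
  unfolding val_KT_def by (rule is_valuation_frac_valuation[OF is_valuation_val_Kpoly])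

lemma val_K_to_fract: "r \<noteq> 0 \<Longrightarrow> val_K (to_fract r) = monomial_val r"
  unfolding val_K_def to_fract_def by (rule frac_valuation_Fract_1[OF is_valuation_monomial_val])

lemma val_KT_to_fract: "p \<noteq> 0 \<Longrightarrow> val_KT (to_fract p) = val_Kpoly p"
  unfolding val_KT_def to_fract_def by (rule frac_valuation_Fract_1[OF is_valuation_val_Kpoly])

lemma val_Kpoly_eq_single_coeff:
  assumes "coeff p m \<noteq> 0" "\<And>k. k \<noteq> m \<Longrightarrow> coeff p k = 0"
  shows "val_Kpoly p = val_K (coeff p m) + int m"
proof (rule antisym)
  show "val_Kpoly p \<le> val_K (coeff p m) + int m"
    unfolding val_Kpoly_def by (rule gauss_valuation_le[OF assms(1)])
  have "p \<noteq> 0" using assms(1) by auto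
  moreover have "k = m" if "coeff p k \<noteq> 0" for k using assms(2) that by blast
  ultimately show "val_K (coeff p m) + int m \<le> val_Kpoly p"
    unfolding val_Kpoly_def by (intro gauss_valuation_ge) auto
qed

lemma val_KT_embR: "r \<noteq> 0 \<Longrightarrow> val_KT (embR r) = monomial_val r"
  unfolding embR_eq
  by (subst val_KT_to_fract) (auto simp: to_fract_eq_0_iff val_K_to_fract
      val_Kpoly_eq_single_coeff[of _ 0] coeff_pCons split: nat.splits)

lemma val_KT_varT: "val_KT varT = 1"
  unfolding varT_eq using val_Kpoly_eq_single_coeff[of "[:0, 1:]" 1]
  by (subst val_KT_to_fract) (auto simp: valuation_one[OF is_valuation_val_K] coeff_pCons
      split: nat.splits)

lemma val_KT_varT_power: "val_KT (varT ^ n) = int n"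
  using valuation_power[OF is_valuation_val_KT varT_nonzero, of n] val_KT_varT by simp

lemma discrete_valuation_val_KT: "discrete_valuation val_KT"
  by (rule discrete_valuationI[OF is_valuation_val_KT val_KT_varT varT_nonzero])

lemma embR_in_val_ring: "embR r \<in> val_ring val_KT"
  unfolding val_ring_def using val_KT_embR monomial_val_nonneg by (cases "r = 0") (auto simp: embR_0)

lemma embR_in_val_max_iff: "embR r \<in> val_max val_KT \<longleftrightarrow> r \<in> M"
  using val_KT_embR[of r] monomial_val_pos_iff[of r] is_ideal_0[OF is_ideal_M]
  unfolding val_max_def by (cases "r = 0") (auto simp: embR_0 embR_eq_0_iff)

end

section \<open>The residue field\<close>

lemma poly2_extend:
  assumes "N \<le> K"
  shows "poly2 N c u v = poly2 K (\<lambda>i j. if i < N \<and> j < N then c i j else 0) u v"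
proof -
  have restrict: "(\<Sum>i<K. if i < N then f i else 0) = (\<Sum>i<N. f i)" for f :: "nat \<Rightarrow> 'a ratfun"
  proof -
    have "{i \<in> {..<K}. i < N} = {..<N}" using assms by auto
    then show ?thesis by (simp add: sum.inter_filter[symmetric])
  qed
  have "poly2 K (\<lambda>i j. if i < N \<and> j < N then c i j else 0) u v
      = (\<Sum>i<K. if i < N then (\<Sum>j<K. if j < N then embR (c i j) * u ^ i * v ^ j else 0) else 0)"
    unfolding poly2_def by (rule sum.cong) (auto simp: embR_0 intro!: sum.cong)
  also have "\<dots> = poly2 N c u v" unfolding poly2_def restrict ..
  finally show ?thesis ..
qed

lemma poly2_add: "\<exists>c''. poly2 N c u v + poly2 N' c' u v = poly2 (max N N') c'' u v"
proof -
  have "poly2 K c u v + poly2 K c' u v = poly2 K (\<lambda>i j. c i j + c' i j) u v" for K c c'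
    unfolding poly2_def by (simp add: sum.distrib[symmetric] embR_add distrib_right)
  then show ?thesis
    using poly2_extend[of N "max N N'" c u v] poly2_extend[of N' "max N N'" c' u v] by auto
qed

lemma poly2_smult: "embR r * poly2 N c u v = poly2 N (\<lambda>i j. r * c i j) u v"
  unfolding poly2_def by (simp add: sum_distrib_left embR_mult mult.assoc)

lemma poly2_const: "poly2 1 (\<lambda>i j. r) u v = embR r"
  unfolding poly2_def by simp

lemma poly2_monomial:
  assumes "i < K" "j < K"
  shows "poly2 K (\<lambda>i' j'. if i' = i \<and> j' = j then 1 else 0) u v = u ^ i * v ^ j"
proof -
  have "poly2 K (\<lambda>i' j'. if i' = i \<and> j' = j then 1 else 0) u v
      = (\<Sum>i'<K. \<Sum>j'<K. if i' = i then if j' = j then u ^ i * v ^ j else 0 else 0)"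
    unfolding poly2_def by (intro sum.cong) (auto simp: embR_0 embR_1)
  also have "\<dots> = (\<Sum>i'<K. if i' = i then u ^ i * v ^ j else 0)"
    by (rule sum.cong) (use assms in auto)
  also have "\<dots> = u ^ i * v ^ j" using assms by simp
  finally show ?thesis .
qed

lemma monomial_quotient_eq:
  fixes x y t :: "'f::field"
  assumes "t \<noteq> 0" "a * i + b * j = n + m"
  shows "(x / t ^ a) ^ i * (y / t ^ b) ^ j * t ^ m = x ^ i * y ^ j / t ^ n"
proof -
  have "t ^ (a * i) * t ^ (b * j) = t ^ n * t ^ m" using assms(2) by (simp add: power_add[symmetric])
  then show ?thesis using assms(1)
    by (simp add: power_divide power_mult[symmetric] field_simps mult.commute)
qed

lemma coeff_smult_to_fract_in_range:
  "coeff P m \<in> range to_fract \<Longrightarrow> coeff (smult (to_fract s) P) m \<in> range to_fract"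
  by (auto simp: to_fract_mult[symmetric])

lemma clear_denominators:
  fixes P :: "'a::idom fract poly"
  obtains s where "s \<noteq> 0" "\<And>m. coeff (smult (to_fract s) P) m \<in> range to_fract"
proof -
  have "\<exists>s. s \<noteq> 0 \<and> (\<forall>m. coeff (smult (to_fract s) P) m \<in> range to_fract)"
  proof (induction P rule: pCons_induct)
    case 0
    show ?case using to_fract_0 by (intro exI[of _ 1]) (auto intro: range_eqI)
  next
    case (pCons c P)
    then obtain s where s: "s \<noteq> 0" "\<forall>m. coeff (smult (to_fract s) P) m \<in> range to_fract" by blast
    obtain r t where c: "c = Fract r t" "t \<noteq> 0" by (cases c)
    have "coeff (smult (to_fract (t * s)) (pCons c P)) m \<in> range to_fract" for m
    proof (cases m)
      case 0
      have "to_fract (t * s) * c = Fract (t * (s * r)) (t * 1)"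
        unfolding to_fract_def c by (simp add: ac_simps)
      also have "\<dots> = to_fract (s * r)" unfolding to_fract_def by (rule mult_fract_cancel[OF c(2)])
      finally have "to_fract (t * s) * c = to_fract (s * r)" .
      then show ?thesis using 0 by simp
    next
      case (Suc k)
      obtain y where "coeff (smult (to_fract s) P) k = to_fract y" using s(2) by blast
      then have "to_fract (t * s) * coeff P k = to_fract (t * y)" by (simp add: to_fract_mult)
      then show ?thesis using Suc by simp
    qed
    then show ?case using s c by (intro exI[of _ "t * s"]) simp
  qed
  then show ?thesis using that by blast
qed

lemma ratfun_as_quotient_of_R_polys:
  fixes x :: "'a::idom ratfun"
  assumes "x \<noteq> 0"
  obtains F0 G0 where "\<And>m. coeff F0 m \<in> range to_fract" "\<And>m. coeff G0 m \<in> range to_fract"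
    "F0 \<noteq> 0" "G0 \<noteq> 0" "x = to_fract F0 / to_fract G0"
proof -
  obtain P Q where x: "x = Fract P Q" "Q \<noteq> 0" by (cases x)
  have P: "P \<noteq> 0" using x assms by (auto simp: fract_collapse)
  obtain sP where sP: "sP \<noteq> 0" "\<And>m. coeff (smult (to_fract sP) P) m \<in> range to_fract"
    using clear_denominators[of P] by blast
  obtain sQ where sQ: "sQ \<noteq> 0" "\<And>m. coeff (smult (to_fract sQ) Q) m \<in> range to_fract"
    using clear_denominators[of Q] by blast
  define F0 where "F0 = smult (to_fract sQ) (smult (to_fract sP) P)"
  define G0 where "G0 = smult (to_fract sP) (smult (to_fract sQ) Q)"
  have F0_coeffs: "coeff F0 m \<in> range to_fract" and G0_coeffs: "coeff G0 m \<in> range to_fract" for m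
    unfolding F0_def G0_def using sP sQ by (simp_all only: coeff_smult_to_fract_in_range)
  have F0: "F0 \<noteq> 0" and G0: "G0 \<noteq> 0"
    using sP sQ P x(2) to_fract_eq_0_iff unfolding F0_def G0_def by auto
  have x_eq: "x = to_fract F0 / to_fract G0"
  proof -
    have "Fract P Q = Fract F0 G0" using x(2) G0 unfolding F0_def G0_def by (simp add: eq_fract mult.commute)
    then show ?thesis using x unfolding to_fract_def by (simp add: divide_fract)
  qed
  then show ?thesis using that F0_coeffs G0_coeffs F0 G0 by blast
qed

context weighted_regular_local_ring
begin

abbreviation U :: "'a ratfun" where "U \<equiv> embR \<pi> / varT ^ a"
abbreviation V :: "'a ratfun" where "V \<equiv> embR \<delta> / varT ^ b"

lemma U_nonzero: "U \<noteq> 0"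
  by (simp add: embR_eq_0_iff pi_nonzero varT_nonzero)

lemma V_nonzero: "V \<noteq> 0"
  by (simp add: embR_eq_0_iff delta_nonzero varT_nonzero)

lemma val_KT_U: "val_KT U = 0"
  by (simp add: valuation_divide[OF is_valuation_val_KT] val_KT_embR val_KT_varT_power
      monomial_val_pi pi_nonzero varT_nonzero embR_eq_0_iff)

lemma val_KT_V: "val_KT V = 0"
  by (simp add: valuation_divide[OF is_valuation_val_KT] val_KT_embR val_KT_varT_power
      monomial_val_delta delta_nonzero varT_nonzero embR_eq_0_iff)

definition approx_by_UV_poly :: "'a ratfun set" where
  "approx_by_UV_poly = {y. \<exists>N c. y - poly2 N c U V \<in> val_max val_KT}"

lemma approx_by_UV_polyI: "y - poly2 N c U V \<in> val_max val_KT \<Longrightarrow> y \<in> approx_by_UV_poly"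
  unfolding approx_by_UV_poly_def by blast

lemma val_max_subset_approx: "y \<in> val_max val_KT \<Longrightarrow> y \<in> approx_by_UV_poly"
  by (rule approx_by_UV_polyI[of _ 0 "\<lambda>i j. 0"]) (simp add: poly2_def)

lemma poly2_in_approx: "poly2 N c U V \<in> approx_by_UV_poly"
  by (rule approx_by_UV_polyI[of _ N c]) (simp add: val_max_def)

lemma approx_add:
  assumes "x \<in> approx_by_UV_poly" "y \<in> approx_by_UV_poly"
  shows "x + y \<in> approx_by_UV_poly"
proof -
  obtain N c N' c' where "x - poly2 N c U V \<in> val_max val_KT" "y - poly2 N' c' U V \<in> val_max val_KT"
    using assms unfolding approx_by_UV_poly_def by blast
  then have "(x - poly2 N c U V) + (y - poly2 N' c' U V) \<in> val_max val_KT"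
    by (rule val_max_add[OF is_valuation_val_KT])
  moreover obtain c'' where c'': "poly2 N c U V + poly2 N' c' U V = poly2 (max N N') c'' U V"
    using poly2_add by blast
  moreover have "(x - poly2 N c U V) + (y - poly2 N' c' U V) = (x + y) - poly2 (max N N') c'' U V"
    unfolding c''[symmetric] by (simp add: algebra_simps)
  ultimately show ?thesis by (intro approx_by_UV_polyI) simp
qed

lemma approx_sum: "(\<And>i. i \<in> A \<Longrightarrow> f i \<in> approx_by_UV_poly) \<Longrightarrow> sum f A \<in> approx_by_UV_poly"
  by (induction A rule: infinite_finite_induct)
    (auto intro: approx_add val_max_subset_approx simp: val_max_def)

lemma approx_embR_mult:
  assumes "y \<in> approx_by_UV_poly" shows "embR r * y \<in> approx_by_UV_poly"
proof -
  obtain N c where "y - poly2 N c U V \<in> val_max val_KT"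
    using assms unfolding approx_by_UV_poly_def by blast
  then have "embR r * (y - poly2 N c U V) \<in> val_max val_KT"
    by (rule val_max_mult[OF is_valuation_val_KT embR_in_val_ring])
  then have "embR r * y - poly2 N (\<lambda>i j. r * c i j) U V \<in> val_max val_KT"
    by (simp add: right_diff_distrib poly2_smult)
  then show ?thesis by (rule approx_by_UV_polyI)
qed

lemma approx_monomial:
  assumes "n \<le> a * i + b * j" shows "embR (\<pi> ^ i * \<delta> ^ j) / varT ^ n \<in> approx_by_UV_poly"
proof -
  define m where "m = a * i + b * j - n"
  have "U ^ i * V ^ j * varT ^ m = embR \<pi> ^ i * embR \<delta> ^ j / varT ^ n"
    by (rule monomial_quotient_eq[OF varT_nonzero]) (use assms in \<open>simp add: m_def\<close>)
  then have e: "embR (\<pi> ^ i * \<delta> ^ j) / varT ^ n = U ^ i * V ^ j * varT ^ m"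
    by (simp add: embR_mult embR_power)
  show ?thesis
  proof (cases "m = 0")
    case True
    then show ?thesis unfolding e using poly2_in_approx poly2_monomial[of i "Suc (max i j)" j]
      by (metis less_Suc_eq_le max.cobounded1 max.cobounded2 mult.right_neutral power_0)
  next
    case False
    have "val_KT (U ^ i) = 0" "val_KT (V ^ j) = 0"
      using valuation_power[OF is_valuation_val_KT U_nonzero, of i]
        valuation_power[OF is_valuation_val_KT V_nonzero, of j] val_KT_U val_KT_V by simp_all
    then have "val_KT (U ^ i * V ^ j * varT ^ m) = int m"
      using valuation_mult[OF is_valuation_val_KT, of "U ^ i * V ^ j" "varT ^ m"]
        valuation_mult[OF is_valuation_val_KT, of "U ^ i" "V ^ j"]
        U_nonzero V_nonzero val_KT_varT_power[of m]
      by (simp add: varT_nonzero del: power_divide)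
    then show ?thesis unfolding e using False by (intro val_max_subset_approx) (simp add: val_max_def)
  qed
qed

lemma approx_weight_ideal:
  assumes "r \<in> weight_ideal k" shows "embR r / varT ^ k \<in> approx_by_UV_poly"
proof -
  have "is_ideal {r. embR r / varT ^ k \<in> approx_by_UV_poly}"
    unfolding is_ideal_def
  proof (intro conjI ballI allI)
    show "0 \<in> {r. embR r / varT ^ k \<in> approx_by_UV_poly}"
      using val_max_subset_approx[of 0] by (simp add: embR_0 val_max_def)
    fix x y assume "x \<in> {r. embR r / varT ^ k \<in> approx_by_UV_poly}"
      "y \<in> {r. embR r / varT ^ k \<in> approx_by_UV_poly}"
    then show "x + y \<in> {r. embR r / varT ^ k \<in> approx_by_UV_poly}"
      using approx_add by (simp add: embR_add add_divide_distrib)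
  next
    fix r x assume "x \<in> {r. embR r / varT ^ k \<in> approx_by_UV_poly}"
    then have "embR r * (embR x / varT ^ k) \<in> approx_by_UV_poly"
      by (intro approx_embR_mult) simp
    then show "r * x \<in> {r. embR r / varT ^ k \<in> approx_by_UV_poly}"
      by (simp add: embR_mult)
  qed
  then have "weight_ideal k \<subseteq> {r. embR r / varT ^ k \<in> approx_by_UV_poly}"
    using approx_monomial by (intro weight_ideal_least) auto
  then show ?thesis using assms by blast
qed

lemma approx_term:
  assumes "r \<noteq> 0" "int n \<le> monomial_val r + int m"
  shows "embR r * varT ^ m / varT ^ n \<in> approx_by_UV_poly"
proof (cases "n \<le> m")
  case True
  have "(varT :: 'a ratfun) ^ m = varT ^ (m - n) * varT ^ n" using True by (simp add: power_add[symmetric])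
  then have e: "embR r * varT ^ m / varT ^ n = embR r * varT ^ (m - n)"
    by (simp add: varT_nonzero)
  show ?thesis
  proof (cases "m = n")
    case True
    then show ?thesis unfolding e using poly2_in_approx[of 1 "\<lambda>i j. r"] poly2_const[of r] by simp
  next
    case False
    have "val_KT (embR r * varT ^ (m - n)) = monomial_val r + int (m - n)"
      by (simp add: valuation_mult[OF is_valuation_val_KT] val_KT_embR[OF assms(1)]
          val_KT_varT_power embR_eq_0_iff assms(1) varT_nonzero)
    then show ?thesis unfolding e using False True monomial_val_nonneg[of r]
      by (intro val_max_subset_approx) (simp add: val_max_def)
  qed
next
  case False
  have "(varT :: 'a ratfun) ^ n = varT ^ m * varT ^ (n - m)" using False by (simp add: power_add[symmetric])
  then have "embR r * varT ^ m / varT ^ n = embR r / varT ^ (n - m)"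
    by (simp add: varT_nonzero)
  moreover have "r \<in> weight_ideal (n - m)" using monomial_val_ge[OF assms(1)] assms(2) False by simp
  ultimately show ?thesis using approx_weight_ideal by simp
qed

lemma approx_poly:
  assumes coeffs: "\<And>m. coeff F m \<in> range to_fract" and val: "F = 0 \<or> int n \<le> val_Kpoly F"
  shows "to_fract F / varT ^ n \<in> approx_by_UV_poly"
proof -
  have "\<forall>m. \<exists>r. coeff F m = to_fract r" using coeffs by blast
  from choice[OF this] obtain rr where rr: "\<And>m. coeff F m = to_fract (rr m)" by blast
  have "to_fract F = (\<Sum>m\<le>degree F. to_fract (monom (coeff F m) m))"
    by (subst poly_as_sum_of_monoms[symmetric]) (rule to_fract_sum)
  also have "\<dots> = (\<Sum>m\<le>degree F. embR (rr m) * varT ^ m)"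
    by (simp add: to_fract_monom rr embR_eq)
  finally have "to_fract F / varT ^ n = (\<Sum>m\<le>degree F. embR (rr m) * varT ^ m / varT ^ n)"
    by (simp add: sum_divide_distrib)
  also have "\<dots> \<in> approx_by_UV_poly"
  proof (rule approx_sum)
    fix m
    show "embR (rr m) * varT ^ m / varT ^ n \<in> approx_by_UV_poly"
    proof (cases "rr m = 0")
      case True
      then show ?thesis using val_max_subset_approx[of 0] by (simp add: embR_0 val_max_def)
    next
      case False
      then have "coeff F m \<noteq> 0" using rr to_fract_eq_0_iff by metis
      then have "int n \<le> val_K (coeff F m) + int m"
        using val gauss_valuation_le[of F m val_K] unfolding val_Kpoly_def by fastforce
      then show ?thesis using rr val_K_to_fract False by (intro approx_term) simp_all
    qed
  qed
  finally show ?thesis .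
qed

lemma val_Kpoly_nonneg:
  assumes "\<And>m. coeff G m \<in> range to_fract" "G \<noteq> 0"
  shows "0 \<le> val_Kpoly G"
  unfolding val_Kpoly_def
proof (rule gauss_valuation_ge[OF assms(2)])
  fix m assume nz: "coeff G m \<noteq> 0"
  obtain r where r: "coeff G m = to_fract r" using assms(1) by blast
  then have "r \<noteq> 0" using nz to_fract_0 by auto
  then show "0 \<le> val_K (coeff G m) + int m" using r val_K_to_fract monomial_val_nonneg by simp
qed

lemma val_ring_quotient_of_approx:
  assumes "x \<in> val_ring val_KT"
  obtains F G where "F \<in> approx_by_UV_poly" "G \<in> approx_by_UV_poly"
    "F \<in> val_ring val_KT" "G \<in> val_ring val_KT" "G \<notin> val_max val_KT" "x = F / G"
proof (cases "x = 0")
  case True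
  have "1 \<in> approx_by_UV_poly" using poly2_in_approx[of 1 "\<lambda>i j. 1"] unfolding poly2_const embR_1 .
  moreover have "val_KT 1 = 0" by (rule valuation_one[OF is_valuation_val_KT])
  ultimately show ?thesis
    using that[of 0 1] True val_max_subset_approx[of 0] by (simp add: val_ring_def val_max_def)
next
  case False
  obtain F0 G0 where F0_coeffs: "\<And>m. coeff F0 m \<in> range to_fract"
    and G0_coeffs: "\<And>m. coeff G0 m \<in> range to_fract"
    and F0: "F0 \<noteq> 0" and G0: "G0 \<noteq> 0" and x_eq: "x = to_fract F0 / to_fract G0"
    using ratfun_as_quotient_of_R_polys[OF False] by blast
  have F0': "to_fract F0 \<noteq> 0" and G0': "to_fract G0 \<noteq> 0" using F0 G0 to_fract_eq_0_iff by auto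
  have "val_KT x = val_Kpoly F0 - val_Kpoly G0"
    unfolding x_eq using valuation_divide[OF is_valuation_val_KT F0' G0'] val_KT_to_fract F0 G0 by simp
  moreover have "0 \<le> val_KT x" using assms False unfolding val_ring_def by simp
  ultimately have FG: "val_Kpoly G0 \<le> val_Kpoly F0" by simp
  define n where "n = nat (val_Kpoly G0)"
  have n: "int n = val_Kpoly G0" unfolding n_def using val_Kpoly_nonneg[OF G0_coeffs G0] by simp
  define F where "F = to_fract F0 / varT ^ n"
  define G where "G = to_fract G0 / varT ^ n"
  have val_F: "val_KT F = val_Kpoly F0 - int n" and val_G: "val_KT G = 0"
    unfolding F_def G_def using valuation_divide[OF is_valuation_val_KT] val_KT_to_fract
      val_KT_varT_power F0 G0 F0' G0' n by (simp_all add: varT_nonzero)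
  show ?thesis
  proof (rule that[of F G])
    show "F \<in> approx_by_UV_poly" unfolding F_def using F0_coeffs FG n by (intro approx_poly) auto
    show "G \<in> approx_by_UV_poly" unfolding G_def using G0_coeffs n by (intro approx_poly) auto
    show "F \<in> val_ring val_KT" using val_F FG n unfolding val_ring_def by simp
    show "G \<in> val_ring val_KT" "G \<notin> val_max val_KT"
      using val_G G0' unfolding val_ring_def val_max_def G_def by (simp_all add: varT_nonzero)
    show "x = F / G" unfolding x_eq F_def G_def by (simp add: varT_nonzero)
  qed
qed

lemma residue_field_generated_by_UV:
  assumes "x \<in> val_ring val_KT"
  shows "\<exists>N c e. poly2 N e U V \<notin> val_max val_KT \<and>
           x - poly2 N c U V / poly2 N e U V \<in> val_max val_KT"
proof -
  obtain F G where FG: "F \<in> approx_by_UV_poly" "G \<in> approx_by_UV_poly"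
    "F \<in> val_ring val_KT" "G \<in> val_ring val_KT" "G \<notin> val_max val_KT" "x = F / G"
    using val_ring_quotient_of_approx[OF assms] by blast
  obtain N1 c1 N2 c2 where c: "F - poly2 N1 c1 U V \<in> val_max val_KT" "G - poly2 N2 c2 U V \<in> val_max val_KT"
    using FG(1,2) unfolding approx_by_UV_poly_def by blast
  define K where "K = max N1 N2"
  define c1' where "c1' i j = (if i < N1 \<and> j < N1 then c1 i j else 0)" for i j
  define c2' where "c2' i j = (if i < N2 \<and> j < N2 then c2 i j else 0)" for i j
  have "poly2 N1 c1 U V = poly2 K c1' U V" "poly2 N2 c2 U V = poly2 K c2' U V"
    unfolding K_def c1'_def c2'_def by (simp_all add: poly2_extend)
  then show ?thesis
    using val_max_divide_congruent[OF is_valuation_val_KT FG(3) c(1) FG(4,5) c(2)] FG(6) by metis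
qed

definition UV_numerator :: "nat \<Rightarrow> (nat \<Rightarrow> nat \<Rightarrow> 'a) \<Rightarrow> 'a fract poly" where
  "UV_numerator N c = (\<Sum>i<N. \<Sum>j<N.
     monom (to_fract (c i j * (\<pi> ^ i * \<delta> ^ j))) (a * N + b * N - (a * i + b * j)))"

lemma weight_le_bound: "i < N \<Longrightarrow> j < N \<Longrightarrow> a * i + b * j \<le> a * N + b * N"
  by (intro add_mono mult_le_mono2) simp_all

lemma poly2_UV_mult_varT_power:
  "poly2 N c U V * varT ^ (a * N + b * N) = to_fract (UV_numerator N c)"
proof -
  have "embR (c i j) * U ^ i * V ^ j * varT ^ (a * N + b * N)
      = embR (c i j * (\<pi> ^ i * \<delta> ^ j)) * varT ^ (a * N + b * N - (a * i + b * j))"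
    if "i < N" "j < N" for i j
  proof -
    define m where "m = a * N + b * N - (a * i + b * j)"
    have "U ^ i * V ^ j * varT ^ (a * i + b * j) = embR \<pi> ^ i * embR \<delta> ^ j"
      using monomial_quotient_eq[of "varT :: 'a ratfun" a i b j 0] by (simp add: varT_nonzero)
    moreover have "(varT :: 'a ratfun) ^ (a * N + b * N) = varT ^ (a * i + b * j) * varT ^ m"
      using weight_le_bound[OF that] unfolding m_def by (simp add: power_add[symmetric])
    ultimately show ?thesis
      unfolding m_def[symmetric] by (simp add: embR_mult embR_power ac_simps)
  qed
  then have "poly2 N c U V * varT ^ (a * N + b * N)
      = (\<Sum>i<N. \<Sum>j<N. embR (c i j * (\<pi> ^ i * \<delta> ^ j)) * varT ^ (a * N + b * N - (a * i + b * j)))"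
    unfolding poly2_def sum_distrib_right by (intro sum.cong) simp_all
  also have "\<dots> = to_fract (UV_numerator N c)"
    unfolding UV_numerator_def by (simp add: to_fract_sum to_fract_monom embR_eq)
  finally show ?thesis .
qed

lemma coeff_UV_numerator:
  assumes "k \<le> a * N + b * N"
  shows "coeff (UV_numerator N c) (a * N + b * N - k) =
    to_fract (\<Sum>(i, j)\<in>{(i, j) \<in> {..<N} \<times> {..<N}. a * i + b * j = k}. c i j * (\<pi> ^ i * \<delta> ^ j))"
proof -
  have "coeff (UV_numerator N c) (a * N + b * N - k) = (\<Sum>i<N. \<Sum>j<N.
      if a * i + b * j = k then to_fract (c i j * (\<pi> ^ i * \<delta> ^ j)) else 0)"
    unfolding UV_numerator_def coeff_sum coeff_monom
  proof (intro sum.cong refl)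
    fix i j assume "i \<in> {..<N}" "j \<in> {..<N}"
    then have "a * i + b * j \<le> a * N + b * N" by (simp add: weight_le_bound)
    then have "(a * N + b * N - (a * i + b * j) = a * N + b * N - k) = (a * i + b * j = k)"
      using assms by linarith
    then show "(if a * N + b * N - (a * i + b * j) = a * N + b * N - k
        then to_fract (c i j * (\<pi> ^ i * \<delta> ^ j)) else 0) =
      (if a * i + b * j = k then to_fract (c i j * (\<pi> ^ i * \<delta> ^ j)) else 0)" by simp
  qed
  also have "\<dots> = (\<Sum>(i, j)\<in>{..<N} \<times> {..<N}.
      if a * i + b * j = k then to_fract (c i j * (\<pi> ^ i * \<delta> ^ j)) else 0)"
    by (simp add: sum.cartesian_product)
  also have "\<dots> = (\<Sum>(i, j)\<in>{(i, j) \<in> {..<N} \<times> {..<N}. a * i + b * j = k}.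
      to_fract (c i j * (\<pi> ^ i * \<delta> ^ j)))"
    by (rule sum.mono_neutral_cong_right) (auto split: if_splits)
  also have "\<dots> = to_fract (\<Sum>(i, j)\<in>{(i, j) \<in> {..<N} \<times> {..<N}. a * i + b * j = k}.
      c i j * (\<pi> ^ i * \<delta> ^ j))"
    by (simp add: to_fract_sum case_prod_unfold)
  finally show ?thesis .
qed

text \<open>If \<open>c\<^sub>i\<^sub>0\<^sub>j\<^sub>0\<close> is a unit and \<open>k = a i\<^sub>0 + b j\<^sub>0\<close>, the weight-\<open>k\<close> part of the numerator
  has monomial valuation exactly \<open>k\<close>, so the Gauss valuation of the numerator is at most
  \<open>a N + b N\<close>, i.e. \<open>val_KT\<close> of the polynomial in \<open>U, V\<close> is at most \<open>0\<close>.\<close>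
lemma UV_poly_in_val_max_imp_coeffs_in_M:
  assumes "poly2 N c U V \<in> val_max val_KT" "i0 < N" "j0 < N"
  shows "c i0 j0 \<in> M"
proof (rule ccontr)
  assume unit: "c i0 j0 \<notin> M"
  define L where "L = a * N + b * N"
  define k where "k = a * i0 + b * j0"
  define S where "S = {(i, j) \<in> {..<N} \<times> {..<N}. a * i + b * j = k}"
  define h where "h = (\<Sum>(i, j)\<in>S. c i j * (\<pi> ^ i * \<delta> ^ j))"
  have kL: "k \<le> L" unfolding k_def L_def using weight_le_bound assms(2,3) .
  have "finite S" unfolding S_def by (rule finite_subset[of _ "{..<N} \<times> {..<N}"]) auto
  then have "h \<notin> weight_ideal (Suc k)" unfolding h_def
    by (rule homogeneous_sum_notin_weight_ideal) (use assms unit in \<open>auto simp: S_def k_def\<close>)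
  moreover have "h \<in> weight_ideal k" unfolding h_def S_def
    by (intro is_ideal_sum[OF is_ideal_weight_ideal]) (auto intro!: is_ideal_mult_left[OF is_ideal_weight_ideal] monomial_in_weight_ideal)
  ultimately have h: "h \<noteq> 0" "monomial_val h = int k"
    using monomial_val_eq is_ideal_0[OF is_ideal_weight_ideal] by auto
  have coeff: "coeff (UV_numerator N c) (L - k) = to_fract h"
    unfolding L_def h_def S_def using coeff_UV_numerator kL L_def by simp
  then have nz: "coeff (UV_numerator N c) (L - k) \<noteq> 0" using h(1) by (simp add: to_fract_eq_0_iff)
  then have num: "UV_numerator N c \<noteq> 0" by auto
  have le: "val_Kpoly (UV_numerator N c) \<le> int L"
    using gauss_valuation_le[OF nz, of val_K] coeff h val_K_to_fract kL unfolding val_Kpoly_def by simp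
  have ident: "poly2 N c U V * varT ^ L = to_fract (UV_numerator N c)"
    unfolding L_def by (rule poly2_UV_mult_varT_power)
  then have p0: "poly2 N c U V \<noteq> 0" using num by (auto simp: to_fract_eq_0_iff)
  have "val_KT (poly2 N c U V) + int L = val_Kpoly (UV_numerator N c)"
    using valuation_mult[OF is_valuation_val_KT p0, of "varT ^ L"] ident val_KT_to_fract[OF num]
      val_KT_varT_power by (simp add: varT_nonzero)
  then show False using assms(1) le p0 unfolding val_max_def by simp
qed

end

theorem lemma0p12:
  fixes M :: "'a::idom set" and \<pi> \<delta> :: 'a and a b :: nat
  assumes "noetherian_ring TYPE('a)" and "local_ring TYPE('a)"
    and "maximal_ideal M" and "krull_dim TYPE('a) = 2"
    and "M = ideal2 \<pi> \<delta>"
    and "a > 0" and "b > 0"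
  shows "\<exists>d :: 'a ratfun \<Rightarrow> int. discrete_valuation d \<and>
     d varT = 1 \<and> d (embR \<pi>) = int a \<and> d (embR \<delta>) = int b \<and>
     (\<forall>r. embR r \<in> val_ring d) \<and> (\<forall>r. embR r \<in> val_max d \<longleftrightarrow> r \<in> M) \<and>
     (let u = embR \<pi> / varT ^ a; v = embR \<delta> / varT ^ b in
        u \<in> val_ring d \<and> v \<in> val_ring d \<and>
        (\<forall>x \<in> val_ring d. \<exists>N c e. poly2 N e u v \<notin> val_max d \<and>
            x - poly2 N c u v / poly2 N e u v \<in> val_max d) \<and>
        (\<forall>N c. poly2 N c u v \<in> val_max d \<longrightarrow> (\<forall>i<N. \<forall>j<N. c i j \<in> M)))"
proof -
  interpret weighted_regular_local_ring M \<pi> \<delta> a b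
    by unfold_locales (use assms in auto)
  show ?thesis
    unfolding Let_def
  proof (intro exI[of _ val_KT] conjI allI impI ballI)
    show "discrete_valuation val_KT" by (rule discrete_valuation_val_KT)
    show "val_KT varT = 1" by (rule val_KT_varT)
    show "val_KT (embR \<pi>) = int a" using val_KT_embR[OF pi_nonzero] monomial_val_pi by simp
    show "val_KT (embR \<delta>) = int b" using val_KT_embR[OF delta_nonzero] monomial_val_delta by simp
    show "embR r \<in> val_ring val_KT" "embR r \<in> val_max val_KT \<longleftrightarrow> r \<in> M" for r
      by (rule embR_in_val_ring, rule embR_in_val_max_iff)
    show "U \<in> val_ring val_KT" "V \<in> val_ring val_KT"
      using val_KT_U val_KT_V unfolding val_ring_def by simp_all
    show "\<exists>N c e. poly2 N e U V \<notin> val_max val_KT \<and>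
        x - poly2 N c U V / poly2 N e U V \<in> val_max val_KT" if "x \<in> val_ring val_KT" for x
      using residue_field_generated_by_UV[OF that] .
    show "c i j \<in> M" if "poly2 N c U V \<in> val_max val_KT" "i < N" "j < N" for N c i j
      using UV_poly_in_val_max_imp_coeffs_in_M[OF that] .
  qed
qed

end
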